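(* If an $A_\infty$-algebra $(A,m_\bullet)$ in a monoidal DG category $\mathcal{A}$ is strongly homotopy unital, then it is H-unital, i.e. its non-augmented bar construction $B^{na}_\infty(A)$ is null-homotopic in the DG category of (bounded above) twisted complexes over $\mathcal{A}$.
   Context: Conventions: monoidal product by juxtaposition, unit object $\mathbb{1}$ (unitors suppressed, so $\mathbb{1}A=A$); juxtaposing a morphism with an object means tensoring with its identity; $\mathrm{id}^j=\mathrm{id}_A^{\otimes j}$. Infinite sums in an ambient DG category containing $\mathcal{A}$ as full monoidal subcategory (e.g. $\mathrm{Mod}\text{-}\mathcal{A}$). Twisted complexes: families $(a_i)_{i\in\mathbb{Z}}$, $\alpha_{ij}\colon a_i\to a_j$ of degree $i-j+1$, $\sum\alpha_{ij}$ an endomorphism of $\bigoplus a_i[-i]$, $(-1)^jd\alpha_{ij}+\sum_k\alpha_{kj}\alpha_{ik}=0$; Hom complexes $\mathrm{Hom}(\bigoplus a_k[-k],\bigoplus b_l[-l])$ with component $f\in\mathrm{Hom}^q(a_k,b_l)$ of degree $q+l-k$ and $df=(-1)^ldf+\sum_m(\beta_{lm}f-(-1)^{q+l-k}f\alpha_{mk})$. $A_\infty$-algebra $(A,m_\bullet)$: $m_i\colon A^i\to A$ of degree $2-i$, $i\ge2$, with $B^{na}_\infty(A)$ (object $A^n$ in degree $1-n$, $n\ge1$; twisted differentials $A^{i+k}\to A^i$ equal to $(-1)^{(i-1)(k+1)}\sum_{j=0}^{i-1}(-1)^{jk}\mathrm{id}^{i-j-1}\otimes m_{k+1}\otimes\mathrm{id}^j$)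 a twisted complex. Right modules and $\mathrm{Nod}_\infty\text{-}A$: objects $(E,p_\bullet)$, $p_i\colon EA^{i-1}\to E$ of degree $2-i$, with bar construction (objects $EA^n$ in degree $-n$; twisted differentials $EA^{i+k-1}\to EA^{i-1}$ equal to $(-1)^{(i-1)(k+1)}(\sum_{j=0}^{i-2}(-1)^{jk}\mathrm{id}^{i-j-1}\otimes m_{k+1}\otimes\mathrm{id}^j+(-1)^{(i-1)k}p_{k+1}\otimes\mathrm{id}^{i-1})$) a twisted complex; degree $n$ morphisms $f_i\colon EA^{i-1}\to F$ of degree $n-i+1$ with bar construction components $EA^{i+k-1}\to FA^{i-1}$ equal to $(-1)^{n(i-1)}f_{k+1}\otimes\mathrm{id}^{i-1}$; differential and composition computed on bar constructions. Left modules and $A\text{-}\mathrm{Nod}_\infty$ symmetrically: $p_i\colon A^{i-1}E\to E$, twisted differentials $A^{i+k-1}E\to A^{i-1}E$ equal to $(-1)^{(i-1)(k+1)}(\sum_{j=1}^{i-1}(-1)^{jk}\mathrm{id}^{i-j-1}\otimes m_{k+1}\otimes\mathrm{id}^j+\mathrm{id}^{i-1}\otimes p_{k+1})$, morphism bar components $A^{i+k-1}E\to A^{i-1}F$ equal to $(-1)^{(n+k)(i-1)}\mathrm{id}^{i-1}\otimes f_{k+1}$. Free right module on $E$: $(EA,\mathrm{id}_E\otimes m_\bullet)$; similarly free left modules. $\mu_2\colon A^2\to A$ in $\mathrm{Nod}_\infty\text{-}A$ is the morphism of right modules (from the free module $A\cdot A$) with components $(\mu_2)_j=(-1)^{j-1}m_{j+1}\colon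 A^2A^{j-1}\to A$; in $A\text{-}\mathrm{Nod}_\infty$, $\mu_2$ has components $m_{j+1}\colon A^{j-1}A^2\to A$. Strongly homotopy unital: there exist a closed degree $0$ morphism $\eta\colon\mathbb{1}\to A$ in $\mathcal{A}$, a degree $-1$ endomorphism $h^r_\bullet$ of $A$ in $\mathrm{Nod}_\infty\text{-}A$ and a degree $-1$ endomorphism $h^l_\bullet$ of $A$ in $A\text{-}\mathrm{Nod}_\infty$ with $\mu_2\circ\eta A=\mathrm{id}_A+dh^r_\bullet$ in $\mathrm{Nod}_\infty\text{-}A$ and $\mu_2\circ A\eta=\mathrm{id}_A+dh^l_\bullet$ in $A\text{-}\mathrm{Nod}_\infty$, where $\eta A$ (resp. $A\eta$) is the strict morphism $A\to A^2$ with first component $\eta\otimes\mathrm{id}_A$ (resp. $\mathrm{id}_A\otimes\eta$) and zero higher components. *)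

theory Defs
  imports Main
begin

section \<open>Strict monoidal DG categories (Z-linear), given by an untyped morphism carrier\<close>

text \<open>Morphisms live in a common type 'm; hom C a b n is the set of degree-n morphisms a to b.
  Composition cmp C g f means g after f.  Tensor of objects tens, of morphisms tensm.\<close>

record ('o, 'm) mdg =
  hom   :: "'o \<Rightarrow> 'o \<Rightarrow> int \<Rightarrow> 'm set"
  cmp   :: "'m \<Rightarrow> 'm \<Rightarrow> 'm"
  ident :: "'o \<Rightarrow> 'm"
  dif   :: "'m \<Rightarrow> 'm"
  tens  :: "'o \<Rightarrow> 'o \<Rightarrow> 'o"
  tunit :: "'o"
  tensm :: "'m \<Rightarrow> 'm \<Rightarrow> 'm"

definition neg1 :: "int \<Rightarrow> 'm::uminus \<Rightarrow> 'm" where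
  "neg1 n x = (if even n then x else - x)"

definition monoidal_dg :: "('o, 'm::ab_group_add) mdg \<Rightarrow> bool" where
  "monoidal_dg C \<longleftrightarrow>
    (\<forall>a b n. 0 \<in> hom C a b n
       \<and> (\<forall>f\<in>hom C a b n. \<forall>g\<in>hom C a b n. f + g \<in> hom C a b n)
       \<and> (\<forall>f\<in>hom C a b n. - f \<in> hom C a b n)) \<and>
    (\<forall>a b c p q. \<forall>g\<in>hom C b c p. \<forall>f\<in>hom C a b q. cmp C g f \<in> hom C a c (p + q)) \<and>
    (\<forall>a b c e p q r. \<forall>h\<in>hom C c e p. \<forall>g\<in>hom C b c q. \<forall>f\<in>hom C a b r.
       cmp C h (cmp C g f) = cmp C (cmp C h g) f) \<and>
    (\<forall>a. ident C a \<in> hom C a a 0) \<and>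
    (\<forall>a b n. \<forall>f\<in>hom C a b n. cmp C (ident C b) f = f \<and> cmp C f (ident C a) = f) \<and>
    (\<forall>a b c p q. \<forall>g\<in>hom C b c p. \<forall>g'\<in>hom C b c p. \<forall>f\<in>hom C a b q. \<forall>f'\<in>hom C a b q.
       cmp C (g + g') f = cmp C g f + cmp C g' f \<and> cmp C g (f + f') = cmp C g f + cmp C g f') \<and>
    (\<forall>a b n. \<forall>f\<in>hom C a b n. dif C f \<in> hom C a b (n + 1) \<and> dif C (dif C f) = 0) \<and>
    (\<forall>a b n. \<forall>f\<in>hom C a b n. \<forall>g\<in>hom C a b n. dif C (f + g) = dif C f + dif C g) \<and>
    (\<forall>a. dif C (ident C a) = 0) \<and>
    (\<forall>a b c p q. \<forall>g\<in>hom C b c p. \<forall>f\<in>hom C a b q.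
       dif C (cmp C g f) = cmp C (dif C g) f + neg1 p (cmp C g (dif C f))) \<and>
    (\<forall>a b c. tens C (tens C a b) c = tens C a (tens C b c)) \<and>
    (\<forall>a. tens C (tunit C) a = a \<and> tens C a (tunit C) = a) \<and>
    (\<forall>a b c d p q. \<forall>f\<in>hom C a b p. \<forall>g\<in>hom C c d q.
       tensm C f g \<in> hom C (tens C a c) (tens C b d) (p + q)) \<and>
    (\<forall>a b c d e g p q r. \<forall>f1\<in>hom C a b p. \<forall>f2\<in>hom C c d q. \<forall>f3\<in>hom C e g r.
       tensm C (tensm C f1 f2) f3 = tensm C f1 (tensm C f2 f3)) \<and>
    (\<forall>a b n. \<forall>f\<in>hom C a b n.
       tensm C (ident C (tunit C)) f = f \<and> tensm C f (ident C (tunit C)) = f) \<and>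
    (\<forall>a b. tensm C (ident C a) (ident C b) = ident C (tens C a b)) \<and>
    (\<forall>a b c d p q. \<forall>f\<in>hom C a b p. \<forall>f'\<in>hom C a b p. \<forall>g\<in>hom C c d q. \<forall>g'\<in>hom C c d q.
       tensm C (f + f') g = tensm C f g + tensm C f' g \<and> tensm C f (g + g') = tensm C f g + tensm C f g') \<and>
    (\<forall>a a' b c c' d p q r s. \<forall>f\<in>hom C a b p. \<forall>g\<in>hom C c d q. \<forall>f'\<in>hom C a' a r. \<forall>g'\<in>hom C c' c s.
       cmp C (tensm C f g) (tensm C f' g') = neg1 (q * r) (tensm C (cmp C f f') (cmp C g g'))) \<and>
    (\<forall>a b c d p q. \<forall>f\<in>hom C a b p. \<forall>g\<in>hom C c d q.
       dif C (tensm C f g) = tensm C (dif C f) g + neg1 p (tensm C f (dif C g)))"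

primrec opow :: "('o, 'm) mdg \<Rightarrow> 'o \<Rightarrow> nat \<Rightarrow> 'o" where
  "opow C A 0 = tunit C"
| "opow C A (Suc n) = tens C A (opow C A n)"

definition idp :: "('o, 'm) mdg \<Rightarrow> 'o \<Rightarrow> nat \<Rightarrow> 'm" where
  "idp C A n = ident C (opow C A n)"

section \<open>Twisted complexes (matrices indexed by positions in an index set I)\<close>

definition fsum :: "('i \<Rightarrow> 'm::comm_monoid_add) \<Rightarrow> 'm" where
  "fsum g = sum g {x. g x \<noteq> 0}"

text \<open>A morphism of total degree n: component k to l lies in Hom^(n+k-l)(a k, b l); row-finite
  (maps out of a summand land in finitely many summands of the target sum).\<close>
definition tw_mor :: "('o, 'm::zero) mdg \<Rightarrow> int set \<Rightarrow> int set \<Rightarrow> (int \<Rightarrow> 'o) \<Rightarrow> (int \<Rightarrow> 'o)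
    \<Rightarrow> int \<Rightarrow> (int \<Rightarrow> int \<Rightarrow> 'm) \<Rightarrow> bool" where
  "tw_mor C I J a b n f \<longleftrightarrow>
     (\<forall>k l. if k \<in> I \<and> l \<in> J then f k l \<in> hom C (a k) (b l) (n + k - l) else f k l = 0) \<and>
     (\<forall>k. finite {l. f k l \<noteq> 0})"

definition tw_comp :: "('o, 'm::ab_group_add) mdg \<Rightarrow> (int \<Rightarrow> int \<Rightarrow> 'm) \<Rightarrow> (int \<Rightarrow> int \<Rightarrow> 'm)
    \<Rightarrow> int \<Rightarrow> int \<Rightarrow> 'm" where
  "tw_comp C g f = (\<lambda>k l. fsum (\<lambda>m. cmp C (g m l) (f k m)))"

definition tw_d :: "('o, 'm::ab_group_add) mdg \<Rightarrow> (int \<Rightarrow> int \<Rightarrow> 'm) \<Rightarrow> (int \<Rightarrow> int \<Rightarrow> 'm)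
    \<Rightarrow> int \<Rightarrow> (int \<Rightarrow> int \<Rightarrow> 'm) \<Rightarrow> int \<Rightarrow> int \<Rightarrow> 'm" where
  "tw_d C \<alpha> \<beta> n f = (\<lambda>k l. neg1 l (dif C (f k l)) + fsum (\<lambda>m. cmp C (\<beta> m l) (f k m))
                          - neg1 n (fsum (\<lambda>m. cmp C (f m l) (\<alpha> k m))))"

definition tw_id :: "('o, 'm::zero) mdg \<Rightarrow> int set \<Rightarrow> (int \<Rightarrow> 'o) \<Rightarrow> int \<Rightarrow> int \<Rightarrow> 'm" where
  "tw_id C I a = (\<lambda>k l. if k = l \<and> k \<in> I then ident C (a k) else 0)"

definition tw_complex :: "('o, 'm::ab_group_add) mdg \<Rightarrow> int set \<Rightarrow> (int \<Rightarrow> 'o)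
    \<Rightarrow> (int \<Rightarrow> int \<Rightarrow> 'm) \<Rightarrow> bool" where
  "tw_complex C I a \<alpha> \<longleftrightarrow> tw_mor C I I a a 1 \<alpha> \<and>
     (\<forall>i\<in>I. \<forall>j\<in>I. neg1 j (dif C (\<alpha> i j)) + fsum (\<lambda>k. cmp C (\<alpha> k j) (\<alpha> i k)) = 0)"

definition tw_null_homotopic :: "('o, 'm::ab_group_add) mdg \<Rightarrow> int set \<Rightarrow> (int \<Rightarrow> 'o)
    \<Rightarrow> (int \<Rightarrow> int \<Rightarrow> 'm) \<Rightarrow> bool" where
  "tw_null_homotopic C I a \<alpha> \<longleftrightarrow>
     (\<exists>H. tw_mor C I I a a (-1) H \<and> tw_d C \<alpha> \<alpha> (-1) H = tw_id C I a)"

section \<open>A-infinity algebras and the non-augmented bar construction\<close>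

text \<open>Position p \<le> 0 carries A^(1-p) (degree 1-n for A^n).  Differential from A^(i+k)
  (position 1-i-k) to A^i (position 1-i).\<close>
definition bar_obj :: "('o, 'm) mdg \<Rightarrow> 'o \<Rightarrow> int \<Rightarrow> 'o" where
  "bar_obj C A = (\<lambda>p. opow C A (nat (1 - p)))"

definition bar_alg :: "('o, 'm::ab_group_add) mdg \<Rightarrow> 'o \<Rightarrow> (nat \<Rightarrow> 'm) \<Rightarrow> int \<Rightarrow> int \<Rightarrow> 'm" where
  "bar_alg C A m = (\<lambda>p q. if p < q \<and> q \<le> 0 then
      (let i = nat (1 - q); k = nat (q - p) in
        neg1 (int ((i - 1) * (k + 1)))
          (\<Sum>j<i. neg1 (int (j * k)) (tensm C (idp C A (i - j - 1)) (tensm C (m (k + 1)) (idp C A j)))))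
      else 0)"

definition ainf_alg :: "('o, 'm::ab_group_add) mdg \<Rightarrow> 'o \<Rightarrow> (nat \<Rightarrow> 'm) \<Rightarrow> bool" where
  "ainf_alg C A m \<longleftrightarrow> (\<forall>i\<ge>2. m i \<in> hom C (opow C A i) A (2 - int i)) \<and>
     tw_complex C {p. p \<le> 0} (bar_obj C A) (bar_alg C A m)"

section \<open>Right and left A-infinity modules (Nod_\<infinity>-A, A-Nod_\<infinity>)\<close>

text \<open>Bar construction of a right module (E,pE): position p \<le> 0 carries E A^(-p);
  differential from E A^(i+k-1) to E A^(i-1).\<close>
definition rmod_bar :: "('o, 'm::ab_group_add) mdg \<Rightarrow> 'o \<Rightarrow> (nat \<Rightarrow> 'm) \<Rightarrow> 'o \<Rightarrow> (nat \<Rightarrow> 'm)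
    \<Rightarrow> int \<Rightarrow> int \<Rightarrow> 'm" where
  "rmod_bar C A m E pE = (\<lambda>p q. if p < q \<and> q \<le> 0 then
      (let i = nat (1 - q); k = nat (q - p) in
        neg1 (int ((i - 1) * (k + 1)))
          ((\<Sum>j<i - 1. neg1 (int (j * k))
              (tensm C (tensm C (ident C E) (idp C A (i - j - 2))) (tensm C (m (k + 1)) (idp C A j))))
           + neg1 (int ((i - 1) * k)) (tensm C (pE (k + 1)) (idp C A (i - 1)))))
      else 0)"

text \<open>Bar construction of a degree-n right module morphism: E A^(i+k-1) to F A^(i-1).\<close>
definition rbar :: "('o, 'm::ab_group_add) mdg \<Rightarrow> 'o \<Rightarrow> int \<Rightarrow> (nat \<Rightarrow> 'm) \<Rightarrow> int \<Rightarrow> int \<Rightarrow> 'm" where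
  "rbar C A n f = (\<lambda>p q. if p \<le> q \<and> q \<le> 0 then
      (let i = nat (1 - q); k = nat (q - p) in
        neg1 (n * int (i - 1)) (tensm C (f (k + 1)) (idp C A (i - 1))))
      else 0)"

definition lmod_bar :: "('o, 'm::ab_group_add) mdg \<Rightarrow> 'o \<Rightarrow> (nat \<Rightarrow> 'm) \<Rightarrow> 'o \<Rightarrow> (nat \<Rightarrow> 'm)
    \<Rightarrow> int \<Rightarrow> int \<Rightarrow> 'm" where
  "lmod_bar C A m E pE = (\<lambda>p q. if p < q \<and> q \<le> 0 then
      (let i = nat (1 - q); k = nat (q - p) in
        neg1 (int ((i - 1) * (k + 1)))
          ((\<Sum>j\<in>{1..<i}. neg1 (int (j * k))
              (tensm C (idp C A (i - j - 1)) (tensm C (m (k + 1)) (tensm C (idp C A (j - 1)) (ident C E)))))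
           + tensm C (idp C A (i - 1)) (pE (k + 1))))
      else 0)"

definition lbar :: "('o, 'm::ab_group_add) mdg \<Rightarrow> 'o \<Rightarrow> int \<Rightarrow> (nat \<Rightarrow> 'm) \<Rightarrow> int \<Rightarrow> int \<Rightarrow> 'm" where
  "lbar C A n f = (\<lambda>p q. if p \<le> q \<and> q \<le> 0 then
      (let i = nat (1 - q); k = nat (q - p) in
        neg1 ((n + int k) * int (i - 1)) (tensm C (idp C A (i - 1)) (f (k + 1))))
      else 0)"

definition rmod_mor :: "('o, 'm) mdg \<Rightarrow> 'o \<Rightarrow> 'o \<Rightarrow> 'o \<Rightarrow> int \<Rightarrow> (nat \<Rightarrow> 'm) \<Rightarrow> bool" where
  "rmod_mor C A E F n f \<longleftrightarrow>
     (\<forall>i\<ge>1. f i \<in> hom C (tens C E (opow C A (i - 1))) F (n - int i + 1))"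

definition lmod_mor :: "('o, 'm) mdg \<Rightarrow> 'o \<Rightarrow> 'o \<Rightarrow> 'o \<Rightarrow> int \<Rightarrow> (nat \<Rightarrow> 'm) \<Rightarrow> bool" where
  "lmod_mor C A E F n f \<longleftrightarrow>
     (\<forall>i\<ge>1. f i \<in> hom C (tens C (opow C A (i - 1)) E) F (n - int i + 1))"

text \<open>Differential and composition computed on bar constructions: the i-th component is the
  component from position 1-i (E A^(i-1)) to position 0 (F).\<close>
definition rmod_dif :: "('o, 'm::ab_group_add) mdg \<Rightarrow> 'o \<Rightarrow> (nat \<Rightarrow> 'm) \<Rightarrow> 'o \<Rightarrow> (nat \<Rightarrow> 'm)
    \<Rightarrow> 'o \<Rightarrow> (nat \<Rightarrow> 'm) \<Rightarrow> int \<Rightarrow> (nat \<Rightarrow> 'm) \<Rightarrow> nat \<Rightarrow> 'm" where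
  "rmod_dif C A m E pE F pF n f = (\<lambda>i. if 1 \<le> i then
      tw_d C (rmod_bar C A m E pE) (rmod_bar C A m F pF) n (rbar C A n f) (1 - int i) 0 else 0)"

definition rmod_cmp :: "('o, 'm::ab_group_add) mdg \<Rightarrow> 'o \<Rightarrow> int \<Rightarrow> (nat \<Rightarrow> 'm) \<Rightarrow> int \<Rightarrow> (nat \<Rightarrow> 'm)
    \<Rightarrow> nat \<Rightarrow> 'm" where
  "rmod_cmp C A ng g nf f = (\<lambda>i. if 1 \<le> i then
      tw_comp C (rbar C A ng g) (rbar C A nf f) (1 - int i) 0 else 0)"

definition lmod_dif :: "('o, 'm::ab_group_add) mdg \<Rightarrow> 'o \<Rightarrow> (nat \<Rightarrow> 'm) \<Rightarrow> 'o \<Rightarrow> (nat \<Rightarrow> 'm)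
    \<Rightarrow> 'o \<Rightarrow> (nat \<Rightarrow> 'm) \<Rightarrow> int \<Rightarrow> (nat \<Rightarrow> 'm) \<Rightarrow> nat \<Rightarrow> 'm" where
  "lmod_dif C A m E pE F pF n f = (\<lambda>i. if 1 \<le> i then
      tw_d C (lmod_bar C A m E pE) (lmod_bar C A m F pF) n (lbar C A n f) (1 - int i) 0 else 0)"

definition lmod_cmp :: "('o, 'm::ab_group_add) mdg \<Rightarrow> 'o \<Rightarrow> int \<Rightarrow> (nat \<Rightarrow> 'm) \<Rightarrow> int \<Rightarrow> (nat \<Rightarrow> 'm)
    \<Rightarrow> nat \<Rightarrow> 'm" where
  "lmod_cmp C A ng g nf f = (\<lambda>i. if 1 \<le> i then
      tw_comp C (lbar C A ng g) (lbar C A nf f) (1 - int i) 0 else 0)"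

section \<open>Strong homotopy unitality\<close>

definition mod_id :: "('o, 'm::zero) mdg \<Rightarrow> 'o \<Rightarrow> nat \<Rightarrow> 'm" where
  "mod_id C A = (\<lambda>i. if i = 1 then ident C A else 0)"

text \<open>mu_2 as a right module morphism A.A \<rightarrow> A: components (-1)^(j-1) m_(j+1).\<close>
definition rmu2 :: "(nat \<Rightarrow> 'm::{uminus,zero}) \<Rightarrow> nat \<Rightarrow> 'm" where
  "rmu2 m = (\<lambda>j. if 1 \<le> j then neg1 (int j - 1) (m (j + 1)) else 0)"

definition lmu2 :: "(nat \<Rightarrow> 'm::zero) \<Rightarrow> nat \<Rightarrow> 'm" where
  "lmu2 m = (\<lambda>j. if 1 \<le> j then m (j + 1) else 0)"

definition reta :: "('o, 'm::zero) mdg \<Rightarrow> 'o \<Rightarrow> 'm \<Rightarrow> nat \<Rightarrow> 'm" where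
  "reta C A \<eta> = (\<lambda>j. if j = 1 then tensm C \<eta> (ident C A) else 0)"

definition leta :: "('o, 'm::zero) mdg \<Rightarrow> 'o \<Rightarrow> 'm \<Rightarrow> nat \<Rightarrow> 'm" where
  "leta C A \<eta> = (\<lambda>j. if j = 1 then tensm C (ident C A) \<eta> else 0)"

definition strongly_homotopy_unital :: "('o, 'm::ab_group_add) mdg \<Rightarrow> 'o \<Rightarrow> (nat \<Rightarrow> 'm) \<Rightarrow> bool" where
  "strongly_homotopy_unital C A m \<longleftrightarrow>
     (\<exists>\<eta> hr hl. \<eta> \<in> hom C (tunit C) A 0 \<and> dif C \<eta> = 0 \<and>
        rmod_mor C A A A (-1) hr \<and> lmod_mor C A A A (-1) hl \<and>
        rmod_cmp C A 0 (rmu2 m) 0 (reta C A \<eta>) = (\<lambda>i. mod_id C A i + rmod_dif C A m A m A m (-1) hr i) \<and>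
        lmod_cmp C A 0 (lmu2 m) 0 (leta C A \<eta>) = (\<lambda>i. mod_id C A i + lmod_dif C A m A m A m (-1) hl i))"

end

theory Submission
  imports Defs
begin

text \<open>
  Position \<open>p \<le> 0\<close> of the bar complex \<open>B = B\<^sup>n\<^sup>a\<^sub>\<infinity>(A)\<close> carries \<open>A\<^sup>1\<^sup>-\<^sup>p\<close>. Let \<open>\<eta>\<close> and
  \<open>h = h\<^sup>r\<close> witness strong homotopy unitality. Besides the bar construction \<open>R\<close> of \<open>h\<close>,
  consider the degree \<open>-1\<close> endomorphism \<open>S\<close> of \<open>B\<close> that inserts the unit, with components
  \<open>(-1)\<^sup>p \<eta> \<otimes> id : A\<^sup>1\<^sup>-\<^sup>p \<rightarrow> A\<^sup>2\<^sup>-\<^sup>p\<close>. Splitting the insertion of \<open>m\<^sub>k\<^sub>+\<^sub>1\<close> into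
  \<open>A\<^sup>i\<^sup>+\<^sup>k\<close> as \<open>id \<otimes> (\<dots>) + (\<dots>) \<otimes> id\<close>, the components of \<open>dS\<close> become
  \<open>\<plusminus>(m\<^sub>k\<^sub>+\<^sub>1 \<circ> (\<eta> \<otimes> id\<^sup>k)) \<otimes> id\<^sup>r\<close>, i.e. \<open>dS\<close> is the bar construction of
  \<open>\<mu>\<^sub>2 \<circ> \<eta>A\<close>, while \<open>dR\<close> is the bar construction of \<open>dh\<close>. So the right unit relation
  \<open>\<mu>\<^sub>2 \<circ> \<eta>A = id + dh\<close> says \<open>dS = id + dR\<close>, and \<open>S - R\<close> is a contracting homotopy of
  \<open>B\<close>.
\<close>

lemma neg1_simps [simp]:
  fixes x y :: "'m::ab_group_add"
  shows "neg1 n 0 = (0::'m)"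
    and "neg1 a (neg1 b x) = neg1 (a + b) x"
    and "neg1 n (x + y) = neg1 n x + neg1 n y"
    and "neg1 n (- x) = - neg1 n x"
    and "neg1 n (x - y) = neg1 n x - neg1 n y"
  by (auto simp: neg1_def)

lemma neg1_even [simp]: "even n \<Longrightarrow> neg1 n x = x"
  by (simp add: neg1_def)

lemma neg1_odd [simp]: "odd n \<Longrightarrow> neg1 n x = - x"
  by (simp add: neg1_def)

lemma neg1_eqI: "even (a - b) \<Longrightarrow> x = y \<Longrightarrow> neg1 a x = neg1 b y"
  by (auto simp: neg1_def)

lemma neg1_sum: "neg1 n (sum f S) = (\<Sum>x\<in>S. neg1 n (f x :: 'm::ab_group_add))"
  by (auto simp: neg1_def sum_negf)

lemma fsum_eq_sum:
  assumes "finite S" "\<And>x. x \<notin> S \<Longrightarrow> g x = 0"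
  shows "fsum g = sum g S"
proof -
  have "{x. g x \<noteq> 0} \<subseteq> S" using assms(2) by blast
  then show ?thesis
    unfolding fsum_def by (intro sum.mono_neutral_left) (auto simp: assms(1))
qed

lemma fsum_single: "(\<And>y. y \<noteq> x \<Longrightarrow> g y = 0) \<Longrightarrow> fsum g = g x"
  using fsum_eq_sum[of "{x}" g] by simp

lemma fsum_zero: "(\<And>x. g x = 0) \<Longrightarrow> fsum g = 0"
  using fsum_eq_sum[of "{}" g] by simp

lemma fsum_reindex:
  assumes "finite K" "inj_on f K" "\<And>x. x \<notin> f ` K \<Longrightarrow> g x = 0"
  shows "fsum g = (\<Sum>a\<in>K. g (f a))"
proof -
  have "fsum g = sum g (f ` K)"
    using assms by (intro fsum_eq_sum) auto
  also have "\<dots> = (\<Sum>a\<in>K. g (f a))"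
    using assms(2) by (simp add: sum.reindex)
  finally show ?thesis .
qed

lemma fsum_diff:
  fixes g g' :: "'i \<Rightarrow> 'm::ab_group_add"
  assumes "finite S" "\<And>x. x \<notin> S \<Longrightarrow> g x = 0" "\<And>x. x \<notin> S \<Longrightarrow> g' x = 0"
  shows "fsum (\<lambda>x. g x - g' x) = fsum g - fsum g'"
  using assms by (simp add: fsum_eq_sum[of S] sum_subtractf)

lemma nat_one_plus_int [simp]: "nat (1 + int r) = Suc r"
  by simp

section \<open>Morphisms between tensor powers\<close>

locale monoidal_dg_powers =
  fixes C :: "('o, 'm::ab_group_add) mdg" and A :: 'o
  assumes monoidal: "monoidal_dg C"
begin

abbreviation tensor :: "'m \<Rightarrow> 'm \<Rightarrow> 'm"  (infixr \<open>\<otimes>\<close> 75)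
  where "f \<otimes> g \<equiv> tensm C f g"

abbreviation compose :: "'m \<Rightarrow> 'm \<Rightarrow> 'm"  (infixr \<open>\<cdot>\<close> 70)
  where "g \<cdot> f \<equiv> cmp C g f"

abbreviation differential :: "'m \<Rightarrow> 'm"  (\<open>\<partial>\<close>)
  where "\<partial> \<equiv> dif C"

abbreviation I :: "nat \<Rightarrow> 'm"
  where "I n \<equiv> idp C A n"

definition pow_hom :: "'m \<Rightarrow> nat \<Rightarrow> nat \<Rightarrow> int \<Rightarrow> bool" where
  "pow_hom f a b d \<longleftrightarrow> f \<in> hom C (opow C A a) (opow C A b) d"

lemma tens_assoc: "tens C (tens C a b) c = tens C a (tens C b c)"
  using monoidal by (simp add: monoidal_dg_def)

lemma tens_unit: "tens C (tunit C) a = a" "tens C a (tunit C) = a"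
  using monoidal by (simp_all add: monoidal_dg_def)

lemma opow_add: "tens C (opow C A a) (opow C A b) = opow C A (a + b)"
  by (induction a) (auto simp: tens_unit tens_assoc)

lemma ident_A: "ident C A = I 1"
  by (simp add: idp_def tens_unit)

lemma I_add: "I a \<otimes> I b = I (a + b)"
  using monoidal by (simp add: monoidal_dg_def idp_def opow_add[symmetric])

lemma dif_I [simp]: "\<partial> (I n) = 0"
  using monoidal by (simp add: monoidal_dg_def idp_def)

lemma pow_hom_0 [simp]: "pow_hom 0 a b d"
  using monoidal by (simp add: monoidal_dg_def pow_hom_def)

lemma pow_hom_add: "pow_hom f a b d \<Longrightarrow> pow_hom g a b d \<Longrightarrow> pow_hom (f + g) a b d"
  using monoidal by (simp add: monoidal_dg_def pow_hom_def)

lemma pow_hom_uminus [simp]: "pow_hom f a b d \<Longrightarrow> pow_hom (- f) a b d"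
  using monoidal by (simp add: monoidal_dg_def pow_hom_def)

lemma pow_hom_comp: "pow_hom g b c p \<Longrightarrow> pow_hom f a b q \<Longrightarrow> d = p + q \<Longrightarrow> pow_hom (g \<cdot> f) a c d"
  using monoidal by (simp add: monoidal_dg_def pow_hom_def)

lemma pow_hom_tensor:
  assumes "pow_hom f a b p" "pow_hom g c e q" "x = a + c" "y = b + e" "d = p + q"
  shows "pow_hom (f \<otimes> g) x y d"
proof -
  have "f \<otimes> g \<in> hom C (tens C (opow C A a) (opow C A c)) (tens C (opow C A b) (opow C A e)) (p + q)"
    using monoidal assms(1,2) by (simp add: monoidal_dg_def pow_hom_def)
  then show ?thesis
    using assms(3-5) by (simp add: pow_hom_def opow_add)
qed

lemma pow_hom_I: "pow_hom (I n) n n 0"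
  using monoidal by (simp add: monoidal_dg_def pow_hom_def idp_def)

lemma pow_hom_dif: "pow_hom f a b d \<Longrightarrow> d' = d + 1 \<Longrightarrow> pow_hom (\<partial> f) a b d'"
  using monoidal by (simp add: monoidal_dg_def pow_hom_def)

lemma comp_I: "pow_hom f a b d \<Longrightarrow> I b \<cdot> f = f" "pow_hom f a b d \<Longrightarrow> f \<cdot> I a = f"
  using monoidal by (simp_all add: monoidal_dg_def pow_hom_def idp_def)

lemma comp_add_left:
  "pow_hom g b c p \<Longrightarrow> pow_hom g' b c p \<Longrightarrow> pow_hom f a b q \<Longrightarrow> (g + g') \<cdot> f = g \<cdot> f + g' \<cdot> f"
  using monoidal by (simp add: monoidal_dg_def pow_hom_def)

lemma comp_add_right:
  "pow_hom g b c p \<Longrightarrow> pow_hom f a b q \<Longrightarrow> pow_hom f' a b q \<Longrightarrow> g \<cdot> (f + f') = g \<cdot> f + g \<cdot> f'"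
  using monoidal by (simp add: monoidal_dg_def pow_hom_def)

lemma tensor_add_left:
  "pow_hom f a b p \<Longrightarrow> pow_hom f' a b p \<Longrightarrow> pow_hom g c e q \<Longrightarrow> (f + f') \<otimes> g = f \<otimes> g + f' \<otimes> g"
  using monoidal by (simp add: monoidal_dg_def pow_hom_def)

lemma tensor_add_right:
  "pow_hom f a b p \<Longrightarrow> pow_hom g c e q \<Longrightarrow> pow_hom g' c e q \<Longrightarrow> f \<otimes> (g + g') = f \<otimes> g + f \<otimes> g'"
  using monoidal by (simp add: monoidal_dg_def pow_hom_def)

lemma tensor_assoc:
  "pow_hom f1 a b p \<Longrightarrow> pow_hom f2 c d q \<Longrightarrow> pow_hom f3 e g r \<Longrightarrow> (f1 \<otimes> f2) \<otimes> f3 = f1 \<otimes> f2 \<otimes> f3"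
  using monoidal by (simp add: monoidal_dg_def pow_hom_def)

lemma tensor_I_0: "pow_hom f a b d \<Longrightarrow> I 0 \<otimes> f = f" "pow_hom f a b d \<Longrightarrow> f \<otimes> I 0 = f"
  using monoidal by (simp_all add: monoidal_dg_def pow_hom_def idp_def)

lemma tensor_comp:
  "pow_hom f b b' p \<Longrightarrow> pow_hom g c c' q \<Longrightarrow> pow_hom f' a b r \<Longrightarrow> pow_hom g' e c s \<Longrightarrow>
     (f \<otimes> g) \<cdot> (f' \<otimes> g') = neg1 (q * r) ((f \<cdot> f') \<otimes> (g \<cdot> g'))"
  using monoidal by (simp add: monoidal_dg_def pow_hom_def)

lemma dif_tensor:
  "pow_hom f a b p \<Longrightarrow> pow_hom g c e q \<Longrightarrow> \<partial> (f \<otimes> g) = \<partial> f \<otimes> g + neg1 p (f \<otimes> \<partial> g)"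
  using monoidal by (simp add: monoidal_dg_def pow_hom_def)

lemma dif_add: "pow_hom f a b d \<Longrightarrow> pow_hom g a b d \<Longrightarrow> \<partial> (f + g) = \<partial> f + \<partial> g"
  using monoidal by (simp add: monoidal_dg_def pow_hom_def)

lemma pow_hom_diff: "pow_hom f a b d \<Longrightarrow> pow_hom g a b d \<Longrightarrow> pow_hom (f - g) a b d"
  by (metis pow_hom_add pow_hom_uminus diff_conv_add_uminus)

lemma pow_hom_neg1 [simp]: "pow_hom f a b d \<Longrightarrow> pow_hom (neg1 n f) a b d"
  by (simp add: neg1_def)

lemma pow_hom_sum: "(\<And>x. x \<in> S \<Longrightarrow> pow_hom (f x) a b d) \<Longrightarrow> pow_hom (sum f S) a b d"
  by (induction S rule: infinite_finite_induct) (auto intro: pow_hom_add)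

lemma comp_zero_right [simp]: "pow_hom g b c p \<Longrightarrow> g \<cdot> 0 = 0"
  using comp_add_right[of g b c p 0 0 0 0] by auto

lemma comp_zero_left [simp]: "pow_hom f a b q \<Longrightarrow> 0 \<cdot> f = 0"
  using comp_add_left[of 0 b 0 0 0 f a q] by auto

lemma comp_uminus_right: "pow_hom g b c p \<Longrightarrow> pow_hom f a b q \<Longrightarrow> g \<cdot> (- f) = - (g \<cdot> f)"
  using comp_add_right[of g b c p f a q "- f"] by (auto simp: eq_neg_iff_add_eq_0 add.commute)

lemma comp_uminus_left: "pow_hom g b c p \<Longrightarrow> pow_hom f a b q \<Longrightarrow> (- g) \<cdot> f = - (g \<cdot> f)"
  using comp_add_left[of g b c p "- g" f a q] by (auto simp: eq_neg_iff_add_eq_0 add.commute)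

lemma comp_neg1_right: "pow_hom g b c p \<Longrightarrow> pow_hom f a b q \<Longrightarrow> g \<cdot> neg1 n f = neg1 n (g \<cdot> f)"
  by (simp add: neg1_def comp_uminus_right)

lemma comp_neg1_left: "pow_hom g b c p \<Longrightarrow> pow_hom f a b q \<Longrightarrow> neg1 n g \<cdot> f = neg1 n (g \<cdot> f)"
  by (simp add: neg1_def comp_uminus_left)

lemma comp_diff_right:
  "pow_hom g b c p \<Longrightarrow> pow_hom f a b q \<Longrightarrow> pow_hom f' a b q \<Longrightarrow> g \<cdot> (f - f') = g \<cdot> f - g \<cdot> f'"
  using comp_add_right[of g b c p f a q "- f'"] by (metis pow_hom_uminus comp_uminus_right diff_conv_add_uminus)

lemma comp_diff_left:
  "pow_hom g b c p \<Longrightarrow> pow_hom g' b c p \<Longrightarrow> pow_hom f a b q \<Longrightarrow> (g - g') \<cdot> f = g \<cdot> f - g' \<cdot> f"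
  using comp_add_left[of g b c p "- g'" f a q] by (metis pow_hom_uminus comp_uminus_left diff_conv_add_uminus)

lemma tensor_zero_left [simp]: "pow_hom g c e q \<Longrightarrow> 0 \<otimes> g = 0"
  using tensor_add_left[of 0 0 0 0 0 g c e q] by auto

lemma tensor_zero_right [simp]: "pow_hom f a b p \<Longrightarrow> f \<otimes> 0 = 0"
  using tensor_add_right[of f a b p 0 0 0 0 0] by auto

lemma tensor_uminus_left: "pow_hom f a b p \<Longrightarrow> pow_hom g c e q \<Longrightarrow> (- f) \<otimes> g = - (f \<otimes> g)"
  using tensor_add_left[of f a b p "- f" g c e q] by (auto simp: eq_neg_iff_add_eq_0 add.commute)

lemma tensor_uminus_right: "pow_hom f a b p \<Longrightarrow> pow_hom g c e q \<Longrightarrow> f \<otimes> (- g) = - (f \<otimes> g)"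
  using tensor_add_right[of f a b p g c e q "- g"] by (auto simp: eq_neg_iff_add_eq_0 add.commute)

lemma tensor_neg1_left: "pow_hom f a b p \<Longrightarrow> pow_hom g c e q \<Longrightarrow> neg1 n f \<otimes> g = neg1 n (f \<otimes> g)"
  by (simp add: neg1_def tensor_uminus_left)

lemma tensor_neg1_right: "pow_hom f a b p \<Longrightarrow> pow_hom g c e q \<Longrightarrow> f \<otimes> neg1 n g = neg1 n (f \<otimes> g)"
  by (simp add: neg1_def tensor_uminus_right)

lemma tensor_sum_left:
  "(\<And>x. x \<in> S \<Longrightarrow> pow_hom (f x) a b p) \<Longrightarrow> pow_hom g c e q \<Longrightarrow> sum f S \<otimes> g = (\<Sum>x\<in>S. f x \<otimes> g)"
proof (induction S rule: infinite_finite_induct)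
  case (insert x F)
  then have "pow_hom (sum f F) a b p" by (auto intro!: pow_hom_sum)
  then have "(f x + sum f F) \<otimes> g = f x \<otimes> g + sum f F \<otimes> g"
    using insert by (intro tensor_add_left) auto
  with insert show ?case by simp
qed auto

lemma tensor_sum_neg1_left:
  assumes "\<And>x. x \<in> S \<Longrightarrow> pow_hom (f x) a b p" "pow_hom g c e q"
  shows "(\<Sum>x\<in>S. neg1 (s x) (f x)) \<otimes> g = (\<Sum>x\<in>S. neg1 (s x) (f x \<otimes> g))"
proof -
  have "(\<Sum>x\<in>S. neg1 (s x) (f x)) \<otimes> g = (\<Sum>x\<in>S. neg1 (s x) (f x) \<otimes> g)"
    by (rule tensor_sum_left[OF pow_hom_neg1[OF assms(1)] assms(2)])
  also have "\<dots> = (\<Sum>x\<in>S. neg1 (s x) (f x \<otimes> g))"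
    by (rule sum.cong[OF refl] tensor_neg1_left[OF assms(1,2)])+
  finally show ?thesis .
qed

lemma tensor_sum_right:
  "pow_hom f a b p \<Longrightarrow> (\<And>x. x \<in> S \<Longrightarrow> pow_hom (g x) c e q) \<Longrightarrow> f \<otimes> sum g S = (\<Sum>x\<in>S. f \<otimes> g x)"
proof (induction S rule: infinite_finite_induct)
  case (insert x F)
  then have "pow_hom (sum g F) c e q" by (auto intro!: pow_hom_sum)
  then have "f \<otimes> (g x + sum g F) = f \<otimes> g x + f \<otimes> sum g F"
    using insert by (intro tensor_add_right) auto
  with insert show ?case by simp
qed auto

lemma dif_zero [simp]: "\<partial> 0 = 0"
  using dif_add[of 0 0 0 0 0] by auto

lemma dif_uminus: "pow_hom f a b d \<Longrightarrow> \<partial> (- f) = - \<partial> f"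
  using dif_add[of f a b d "- f"] by (auto simp: eq_neg_iff_add_eq_0 add.commute)

lemma dif_neg1: "pow_hom f a b d \<Longrightarrow> \<partial> (neg1 n f) = neg1 n (\<partial> f)"
  by (simp add: neg1_def dif_uminus)

lemma dif_diff: "pow_hom f a b d \<Longrightarrow> pow_hom g a b d \<Longrightarrow> \<partial> (f - g) = \<partial> f - \<partial> g"
  using dif_add[of f a b d "- g"] by (metis pow_hom_uminus dif_uminus diff_conv_add_uminus)

end

section \<open>Insertion of the higher multiplications\<close>

locale right_unit_data = monoidal_dg_powers C A for C :: "('o, 'm::ab_group_add) mdg" and A +
  fixes m hr :: "nat \<Rightarrow> 'm" and \<eta> :: 'm
  assumes pow_hom_m: "2 \<le> i \<Longrightarrow> pow_hom (m i) i 1 (2 - int i)"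
    and pow_hom_hr: "1 \<le> i \<Longrightarrow> pow_hom (hr i) i 1 (- int i)"
    and pow_hom_eta: "pow_hom \<eta> 0 1 0"
    and dif_eta: "\<partial> \<eta> = 0"
begin

lemma pow_hom_m_Suc: "1 \<le> k \<Longrightarrow> pow_hom (m (k + 1)) (k + 1) 1 (1 - int k)"
  using pow_hom_m[of "k + 1"] by simp

lemma pow_hom_hr_Suc: "pow_hom (hr (k + 1)) (k + 1) 1 (- int k - 1)"
proof -
  have "- int (k + 1) = - int k - 1" by simp
  then show ?thesis using pow_hom_hr[of "k + 1"] by (metis le_add2)
qed

definition m_ins_term :: "nat \<Rightarrow> nat \<Rightarrow> nat \<Rightarrow> 'm" where
  "m_ins_term i k j = neg1 (int (j * k)) (I (i - j - 1) \<otimes> m (k + 1) \<otimes> I j)"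

definition m_ins :: "nat \<Rightarrow> nat \<Rightarrow> 'm" where
  "m_ins i k = (\<Sum>j<i. m_ins_term i k j)"

lemma pow_hom_m_tensor_I: "1 \<le> k \<Longrightarrow> pow_hom (m (k + 1) \<otimes> I j) (k + 1 + j) (1 + j) (1 - int k)"
  by (rule pow_hom_tensor[OF pow_hom_m_Suc pow_hom_I]) auto

lemma pow_hom_m_ins_term: "j < i \<Longrightarrow> 1 \<le> k \<Longrightarrow> pow_hom (m_ins_term i k j) (i + k) i (1 - int k)"
  unfolding m_ins_term_def by (intro pow_hom_neg1 pow_hom_tensor[OF pow_hom_I pow_hom_m_tensor_I]) auto

lemma pow_hom_m_ins: "1 \<le> k \<Longrightarrow> a = i + k \<Longrightarrow> d = 1 - int k \<Longrightarrow> pow_hom (m_ins i k) a i d"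
  unfolding m_ins_def by (auto intro!: pow_hom_sum pow_hom_m_ins_term)

lemma m_ins_0 [simp]: "m_ins 0 k = 0"
  by (simp add: m_ins_def)

lemma m_ins_1: "1 \<le> k \<Longrightarrow> m_ins 1 k = m (k + 1)"
  using tensor_I_0[OF pow_hom_m_Suc] tensor_I_0[OF pow_hom_m_tensor_I, of k 0]
  by (simp add: m_ins_def m_ins_term_def)

lemma I_tensor_m_ins_term:
  assumes "j < r" "1 \<le> k"
  shows "I a \<otimes> m_ins_term r k j = m_ins_term (a + r) k j"
proof -
  have "I a \<otimes> m_ins_term r k j = neg1 (int (j * k)) (I a \<otimes> I (r - j - 1) \<otimes> m (k + 1) \<otimes> I j)"
    unfolding m_ins_term_def
    by (rule tensor_neg1_right[OF pow_hom_I pow_hom_tensor[OF pow_hom_I pow_hom_m_tensor_I]])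
       (use assms in auto)
  also have "I a \<otimes> I (r - j - 1) \<otimes> m (k + 1) \<otimes> I j = I (a + r - j - 1) \<otimes> m (k + 1) \<otimes> I j"
    using tensor_assoc[OF pow_hom_I pow_hom_I pow_hom_m_tensor_I[OF assms(2)], symmetric] assms(1)
    by (simp add: I_add)
  finally show ?thesis
    by (simp add: m_ins_term_def)
qed

lemma m_ins_term_tensor_I:
  assumes "j < a" "1 \<le> k"
  shows "neg1 (int (r * k)) (m_ins_term a k j \<otimes> I r) = m_ins_term (a + r) k (j + r)"
proof -
  have "m_ins_term a k j \<otimes> I r = neg1 (int (j * k)) ((I (a - j - 1) \<otimes> m (k + 1) \<otimes> I j) \<otimes> I r)"
    unfolding m_ins_term_def
    by (rule tensor_neg1_left[OF pow_hom_tensor[OF pow_hom_I pow_hom_m_tensor_I] pow_hom_I])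
       (use assms in auto)
  also have "(I (a - j - 1) \<otimes> m (k + 1) \<otimes> I j) \<otimes> I r = I (a - j - 1) \<otimes> m (k + 1) \<otimes> I (j + r)"
    using tensor_assoc[OF pow_hom_I pow_hom_m_tensor_I[OF assms(2)] pow_hom_I]
      tensor_assoc[OF pow_hom_m_Suc[OF assms(2)] pow_hom_I pow_hom_I]
    by (simp add: I_add)
  finally have "neg1 (int (r * k)) (m_ins_term a k j \<otimes> I r)
      = neg1 (int (r * k) + int (j * k)) (I (a - j - 1) \<otimes> m (k + 1) \<otimes> I (j + r))"
    by simp
  also have "int (r * k) + int (j * k) = int ((j + r) * k)"
    by (simp add: algebra_simps)
  finally show ?thesis
    by (simp add: m_ins_term_def)
qed

lemma m_ins_add:
  assumes "1 \<le> k"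
  shows "m_ins (a + r) k = I a \<otimes> m_ins r k + neg1 (int (r * k)) (m_ins a k \<otimes> I r)"
proof -
  have "m_ins (a + r) k = (\<Sum>j\<in>{0..<r}. m_ins_term (a + r) k j) + (\<Sum>j\<in>{r..<a + r}. m_ins_term (a + r) k j)"
    unfolding m_ins_def lessThan_atLeast0 by (rule sum.atLeastLessThan_concat[symmetric]) auto
  also have "(\<Sum>j\<in>{r..<a + r}. m_ins_term (a + r) k j) = (\<Sum>j<a. m_ins_term (a + r) k (j + r))"
    using sum.shift_bounds_nat_ivl[of "m_ins_term (a + r) k" 0 r a] by (simp add: lessThan_atLeast0)
  also have "(\<Sum>j\<in>{0..<r}. m_ins_term (a + r) k j) = I a \<otimes> m_ins r k"
  proof -
    have "I a \<otimes> m_ins r k = (\<Sum>j<r. I a \<otimes> m_ins_term r k j)"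
      unfolding m_ins_def
      by (rule tensor_sum_right[OF pow_hom_I], rule pow_hom_m_ins_term) (use assms in auto)
    also have "\<dots> = (\<Sum>j\<in>{0..<r}. m_ins_term (a + r) k j)"
      using assms by (simp add: I_tensor_m_ins_term atLeast0LessThan)
    finally show ?thesis ..
  qed
  also have "(\<Sum>j<a. m_ins_term (a + r) k (j + r)) = neg1 (int (r * k)) (m_ins a k \<otimes> I r)"
  proof -
    have "m_ins a k \<otimes> I r = (\<Sum>j<a. m_ins_term a k j \<otimes> I r)"
      unfolding m_ins_def
      by (rule tensor_sum_left[OF _ pow_hom_I], rule pow_hom_m_ins_term) (use assms in auto)
    then have "neg1 (int (r * k)) (m_ins a k \<otimes> I r) = (\<Sum>j<a. neg1 (int (r * k)) (m_ins_term a k j \<otimes> I r))"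
      by (simp only: neg1_sum)
    also have "\<dots> = (\<Sum>j<a. m_ins_term (a + r) k (j + r))"
      using assms by (intro sum.cong refl m_ins_term_tensor_I) auto
    finally show ?thesis ..
  qed
  finally show ?thesis .
qed

section \<open>Endomorphisms of the bar complex\<close>

abbreviation \<alpha> :: "int \<Rightarrow> int \<Rightarrow> 'm"
  where "\<alpha> \<equiv> bar_alg C A m"

abbreviation hbar :: "int \<Rightarrow> int \<Rightarrow> 'm"
  where "hbar \<equiv> rbar C A (-1) hr"

definition eta_bar :: "int \<Rightarrow> int \<Rightarrow> 'm" where
  "eta_bar p q = (if q = p - 1 \<and> p \<le> 0 then neg1 p (\<eta> \<otimes> I (nat (1 - p))) else 0)"

lemma bar_alg_eq:
  "\<alpha> p q = (if p < q \<and> q \<le> 0 then neg1 (q * (q - p + 1)) (m_ins (nat (1 - q)) (nat (q - p))) else 0)"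
proof (cases "p < q \<and> q \<le> 0")
  case True
  have "int (nat (1 - q) - 1) = - q"
    using True by (subst of_nat_diff) auto
  moreover have "int (nat (q - p)) = q - p"
    using True by simp
  ultimately have "int ((nat (1 - q) - 1) * (nat (q - p) + 1)) = - q * (q - p + 1)"
    by (simp only: of_nat_mult of_nat_add of_nat_1)
  then have "neg1 (int ((nat (1 - q) - 1) * (nat (q - p) + 1))) x = neg1 (q * (q - p + 1)) x" for x :: 'm
    by (intro neg1_eqI) simp_all
  with True show ?thesis
    unfolding bar_alg_def Let_def m_ins_def m_ins_term_def by simp
qed (auto simp: bar_alg_def)

lemma hbar_eq:
  "hbar p q = (if p \<le> q \<and> q \<le> 0 then neg1 q (hr (nat (q - p) + 1) \<otimes> I (nat (- q))) else 0)"
proof (cases "p \<le> q \<and> q \<le> 0")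
  case True
  have "int (nat (1 - q) - 1) = - q"
    using True by (subst of_nat_diff) auto
  then have "neg1 (- 1 * int (nat (1 - q) - 1)) x = neg1 q x" for x :: 'm
    by (intro neg1_eqI) simp_all
  moreover have "nat (1 - q) - 1 = nat (- q)"
    using True by simp
  ultimately show ?thesis
    using True unfolding rbar_def Let_def by simp
qed (auto simp: rbar_def)

lemma pow_hom_bar_alg: "pow_hom (\<alpha> p q) (nat (1 - p)) (nat (1 - q)) (1 + p - q)"
  unfolding bar_alg_eq by (auto intro!: pow_hom_neg1 pow_hom_m_ins)

lemma pow_hom_hbar: "pow_hom (hbar p q) (nat (1 - p)) (nat (1 - q)) (-1 + p - q)"
proof (cases "p \<le> q \<and> q \<le> 0")
  case True
  have "pow_hom (hr (nat (q - p) + 1) \<otimes> I (nat (- q))) (nat (1 - p)) (nat (1 - q)) (-1 + p - q)"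
    by (rule pow_hom_tensor[OF pow_hom_hr_Suc pow_hom_I]) (use True in auto)
  then show ?thesis
    using True by (simp add: hbar_eq)
qed (auto simp: hbar_eq)

lemma pow_hom_eta_bar: "pow_hom (eta_bar p q) (nat (1 - p)) (nat (1 - q)) (-1 + p - q)"
  unfolding eta_bar_def by (auto intro!: pow_hom_neg1 pow_hom_tensor[OF pow_hom_eta pow_hom_I])

lemma dif_eta_bar: "\<partial> (eta_bar p q) = 0"
proof -
  have "\<partial> (\<eta> \<otimes> I n) = 0" for n
    using dif_tensor[OF pow_hom_eta pow_hom_I[of n]] dif_eta pow_hom_I[of n] tensor_zero_right[OF pow_hom_eta]
    by simp
  moreover have "pow_hom (\<eta> \<otimes> I n) n (1 + n) 0" for n
    by (rule pow_hom_tensor[OF pow_hom_eta pow_hom_I]) auto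
  ultimately have "\<partial> (neg1 p' (\<eta> \<otimes> I n)) = 0" for p' n
    using dif_neg1[of "\<eta> \<otimes> I n" n "1 + n" 0 p'] by simp
  then show ?thesis
    unfolding eta_bar_def by simp
qed

lemma bar_alg_at: "1 \<le> a \<Longrightarrow> \<alpha> (- int r - int a) (- int r) = neg1 (int r * (int a + 1)) (m_ins (r + 1) a)"
  unfolding bar_alg_eq by (auto intro!: neg1_eqI)

lemma hbar_at: "hbar (- int r - int k) (- int r) = neg1 (int r) (hr (k + 1) \<otimes> I r)"
  unfolding hbar_eq by (auto intro!: neg1_eqI)

definition bar_endo :: "int \<Rightarrow> (int \<Rightarrow> int \<Rightarrow> 'm) \<Rightarrow> bool" where
  "bar_endo n X \<longleftrightarrow> (\<forall>p q. pow_hom (X p q) (nat (1 - p)) (nat (1 - q)) (n + p - q)) \<and>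
     (\<forall>p q. X p q \<noteq> 0 \<longrightarrow> p \<le> 0 \<and> p - 1 \<le> q \<and> q \<le> 0)"

lemma bar_endo_hbar: "bar_endo (-1) hbar"
  unfolding bar_endo_def using pow_hom_hbar by (auto simp: hbar_eq split: if_splits)

lemma bar_endo_eta_bar: "bar_endo (-1) eta_bar"
  unfolding bar_endo_def using pow_hom_eta_bar by (auto simp: eta_bar_def split: if_splits)

lemma bar_endo_diff: "bar_endo n X \<Longrightarrow> bar_endo n Y \<Longrightarrow> bar_endo n (\<lambda>p q. X p q - Y p q)"
  unfolding bar_endo_def by (auto intro!: pow_hom_diff) (metis)+

lemma tw_d_diff:
  assumes X: "bar_endo n X" and Y: "bar_endo n Y"
  shows "tw_d C \<alpha> \<alpha> n (\<lambda>p q. X p q - Y p q) p q = tw_d C \<alpha> \<alpha> n X p q - tw_d C \<alpha> \<alpha> n Y p q"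
proof -
  have tX: "pow_hom (X p q) (nat (1 - p)) (nat (1 - q)) (n + p - q)" for p q
    using X by (simp add: bar_endo_def)
  have tY: "pow_hom (Y p q) (nat (1 - p)) (nat (1 - q)) (n + p - q)" for p q
    using Y by (simp add: bar_endo_def)
  have outside: "x \<notin> {p - 1..0} \<Longrightarrow> X p x = 0 \<and> Y p x = 0" for x
    using X Y by (force simp: bar_endo_def)
  have left: "fsum (\<lambda>x. \<alpha> x q \<cdot> (X p x - Y p x)) = fsum (\<lambda>x. \<alpha> x q \<cdot> X p x) - fsum (\<lambda>x. \<alpha> x q \<cdot> Y p x)"
    unfolding comp_diff_right[OF pow_hom_bar_alg tX tY]
    by (intro fsum_diff[of "{p - 1..0}"]) (simp_all add: outside comp_zero_right[OF pow_hom_bar_alg])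
  have right: "fsum (\<lambda>x. (X x q - Y x q) \<cdot> \<alpha> p x) = fsum (\<lambda>x. X x q \<cdot> \<alpha> p x) - fsum (\<lambda>x. Y x q \<cdot> \<alpha> p x)"
    unfolding comp_diff_left[OF tX tY pow_hom_bar_alg]
    by (intro fsum_diff[of "{p - 1..0}"]) (auto simp: bar_alg_eq comp_zero_right[OF tX] comp_zero_right[OF tY])
  show ?thesis
    unfolding tw_d_def dif_diff[OF tX tY] left right by (simp add: algebra_simps)
qed

lemma tw_d_vanishing:
  assumes X: "bar_endo n X" and closed: "\<And>p. \<partial> (X p (p - 1)) = 0" and pq: "q < p \<or> 0 < q"
  shows "tw_d C \<alpha> \<alpha> n X p q = 0"
proof -
  have tX: "pow_hom (X p q) (nat (1 - p)) (nat (1 - q)) (n + p - q)" for p q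
    using X by (simp add: bar_endo_def)
  have supp: "X p q \<noteq> 0 \<Longrightarrow> p - 1 \<le> q \<and> q \<le> 0" for p q
    using X by (simp add: bar_endo_def)
  have "\<partial> (X p q) = 0"
  proof (cases "X p q = 0")
    case False
    with supp[of p q] pq have "q = p - 1" by auto
    with closed show ?thesis by simp
  qed simp
  moreover have "fsum (\<lambda>x. \<alpha> x q \<cdot> X p x) = 0"
  proof (rule fsum_zero)
    fix x
    show "\<alpha> x q \<cdot> X p x = 0"
    proof (cases "X p x = 0")
      case False
      then have "\<alpha> x q = 0"
        using supp[of p x] pq by (auto simp: bar_alg_eq)
      then show ?thesis by (simp add: comp_zero_left[OF tX])
    qed (simp add: comp_zero_right[OF pow_hom_bar_alg])
  qed
  moreover have "fsum (\<lambda>x. X x q \<cdot> \<alpha> p x) = 0"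
  proof (rule fsum_zero)
    fix x
    show "X x q \<cdot> \<alpha> p x = 0"
    proof (cases "X x q = 0")
      case False
      then have "\<alpha> p x = 0"
        using supp[of x q] pq by (auto simp: bar_alg_eq)
      then show ?thesis by (simp add: comp_zero_right[OF tX])
    qed (simp add: comp_zero_left[OF pow_hom_bar_alg])
  qed
  ultimately show ?thesis
    unfolding tw_d_def by simp
qed

lemma m_ins_Suc_comp:
  assumes a: "1 \<le> a" and f: "pow_hom f n 1 d"
  shows "m_ins (r + 1) a \<cdot> (f \<otimes> I (r + a))
    = neg1 ((1 - int a) * d) (f \<otimes> m_ins r a) + neg1 (int (r * a)) ((m (a + 1) \<cdot> (f \<otimes> I a)) \<otimes> I r)"
proof -
  have tQ: "pow_hom (m_ins r a) (r + a) r (1 - int a)"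
    by (rule pow_hom_m_ins[OF a]) auto
  have tfI: "pow_hom (f \<otimes> I (r + a)) (n + (r + a)) (1 + (r + a)) d"
    by (rule pow_hom_tensor[OF f pow_hom_I]) auto
  have tfIa: "pow_hom (f \<otimes> I a) (n + a) (a + 1) d"
    by (rule pow_hom_tensor[OF f pow_hom_I]) auto
  have tX: "pow_hom (I 1 \<otimes> m_ins r a) (1 + (r + a)) (1 + r) (1 - int a)"
    by (rule pow_hom_tensor[OF pow_hom_I tQ]) auto
  have tY: "pow_hom (m (a + 1) \<otimes> I r) (1 + (r + a)) (1 + r) (1 - int a)"
    by (rule pow_hom_tensor[OF pow_hom_m_Suc[OF a] pow_hom_I]) auto
  have split: "m_ins (r + 1) a = I 1 \<otimes> m_ins r a + neg1 (int (r * a)) (m (a + 1) \<otimes> I r)"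
    using m_ins_add[OF a, of 1 r] m_ins_1[OF a] by simp
  have "m_ins (r + 1) a \<cdot> (f \<otimes> I (r + a))
      = (I 1 \<otimes> m_ins r a) \<cdot> (f \<otimes> I (r + a)) + neg1 (int (r * a)) ((m (a + 1) \<otimes> I r) \<cdot> (f \<otimes> I (r + a)))"
    unfolding split comp_add_left[OF tX pow_hom_neg1[OF tY] tfI] comp_neg1_left[OF tY tfI] ..
  also have "(I 1 \<otimes> m_ins r a) \<cdot> (f \<otimes> I (r + a)) = neg1 ((1 - int a) * d) (f \<otimes> m_ins r a)"
    using tensor_comp[OF pow_hom_I tQ f pow_hom_I] comp_I(1)[OF f] comp_I(2)[OF tQ] by simp
  also have "(m (a + 1) \<otimes> I r) \<cdot> (f \<otimes> I (r + a)) = (m (a + 1) \<cdot> (f \<otimes> I a)) \<otimes> I r"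
  proof -
    have "f \<otimes> I (r + a) = (f \<otimes> I a) \<otimes> I r"
      using tensor_assoc[OF f pow_hom_I pow_hom_I] by (simp add: I_add add.commute)
    then show ?thesis
      using tensor_comp[OF pow_hom_m_Suc[OF a] pow_hom_I tfIa pow_hom_I] comp_I(1)[OF pow_hom_I[of r]] by simp
  qed
  finally show ?thesis .
qed

lemma comp_m_ins:
  assumes b: "1 \<le> b" and f: "pow_hom f n 1 d"
  shows "(f \<otimes> I r) \<cdot> m_ins (n + r) b = f \<otimes> m_ins r b + neg1 (int (r * b)) ((f \<cdot> m_ins n b) \<otimes> I r)"
proof -
  have tQr: "pow_hom (m_ins r b) (r + b) r (1 - int b)"
    by (rule pow_hom_m_ins[OF b]) auto
  have tQn: "pow_hom (m_ins n b) (n + b) n (1 - int b)"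
    by (rule pow_hom_m_ins[OF b]) auto
  have tfI: "pow_hom (f \<otimes> I r) (n + r) (1 + r) d"
    by (rule pow_hom_tensor[OF f pow_hom_I]) auto
  have tX: "pow_hom (I n \<otimes> m_ins r b) (n + (r + b)) (n + r) (1 - int b)"
    by (rule pow_hom_tensor[OF pow_hom_I tQr]) auto
  have tY: "pow_hom (m_ins n b \<otimes> I r) (n + (r + b)) (n + r) (1 - int b)"
    by (rule pow_hom_tensor[OF tQn pow_hom_I]) auto
  have "(f \<otimes> I r) \<cdot> m_ins (n + r) b
      = (f \<otimes> I r) \<cdot> (I n \<otimes> m_ins r b) + neg1 (int (r * b)) ((f \<otimes> I r) \<cdot> (m_ins n b \<otimes> I r))"
    by (simp add: m_ins_add[OF b] comp_add_right[OF tfI tX pow_hom_neg1[OF tY]] comp_neg1_right[OF tfI tY])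
  also have "(f \<otimes> I r) \<cdot> (I n \<otimes> m_ins r b) = f \<otimes> m_ins r b"
    using tensor_comp[OF f pow_hom_I pow_hom_I tQr] comp_I(2)[OF f] comp_I(1)[OF tQr] by simp
  also have "(f \<otimes> I r) \<cdot> (m_ins n b \<otimes> I r) = (f \<cdot> m_ins n b) \<otimes> I r"
    using tensor_comp[OF f pow_hom_I tQn pow_hom_I] comp_I(1)[OF pow_hom_I[of r]] by simp
  finally show ?thesis .
qed

lemma bar_alg_comp_hbar:
  assumes a: "1 \<le> a" and ak: "a \<le> k"
  shows "\<alpha> (- int r - int a) (- int r) \<cdot> hbar (- int r - int k) (- int r - int a)
    = neg1 (int r * int a + int k * int a + int k + 1) (hr (k - a + 1) \<otimes> m_ins r a)
      + neg1 (int a) ((m (a + 1) \<cdot> (hr (k - a + 1) \<otimes> I a)) \<otimes> I r)"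
proof -
  define h where "h = hr (k - a + 1)"
  have th: "pow_hom h (k - a + 1) 1 (- int (k - a) - 1)"
    unfolding h_def by (rule pow_hom_hr_Suc)
  have tQ: "pow_hom (m_ins (r + 1) a) (r + 1 + a) (r + 1) (1 - int a)"
    by (rule pow_hom_m_ins[OF a]) auto
  have thI: "pow_hom (h \<otimes> I (r + a)) (k + r + 1) (r + 1 + a) (- int (k - a) - 1)"
    by (rule pow_hom_tensor[OF th pow_hom_I]) (use ak in auto)
  have eR: "hbar (- int r - int k) (- int r - int a) = neg1 (int (r + a)) (h \<otimes> I (r + a))"
    using hbar_at[of "r + a" "k - a"] ak by (simp add: of_nat_diff h_def)
  have "\<alpha> (- int r - int a) (- int r) \<cdot> hbar (- int r - int k) (- int r - int a)
      = neg1 (int r * (int a + 1)) (neg1 (int (r + a)) (m_ins (r + 1) a \<cdot> (h \<otimes> I (r + a))))"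
    unfolding bar_alg_at[OF a] eR comp_neg1_left[OF tQ pow_hom_neg1[OF thI]] comp_neg1_right[OF tQ thI] ..
  also have "\<dots> = neg1 (int r * (int a + 1) + int (r + a) + (1 - int a) * (- int (k - a) - 1)) (h \<otimes> m_ins r a)
      + neg1 (int r * (int a + 1) + int (r + a) + int (r * a)) ((m (a + 1) \<cdot> (h \<otimes> I a)) \<otimes> I r)"
    unfolding m_ins_Suc_comp[OF a th] neg1_simps by (simp only: add.assoc)
  also have "\<dots> = neg1 (int r * int a + int k * int a + int k + 1) (h \<otimes> m_ins r a)
      + neg1 (int a) ((m (a + 1) \<cdot> (h \<otimes> I a)) \<otimes> I r)"
    using ak by (intro arg_cong2[where f = "(+)"] neg1_eqI) (auto simp: of_nat_diff algebra_simps)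
  finally show ?thesis
    unfolding h_def .
qed

lemma hbar_comp_bar_alg:
  assumes b: "1 \<le> b" and bk: "b \<le> k"
  shows "hbar (- int r - int k + int b) (- int r) \<cdot> \<alpha> (- int r - int k) (- int r - int k + int b)
    = neg1 (int r * int b + int k * int b + int k) (hr (k - b + 1) \<otimes> m_ins r b)
      + neg1 ((int k - int b) * (int b + 1)) ((hr (k - b + 1) \<cdot> m_ins (k - b + 1) b) \<otimes> I r)"
proof -
  define h where "h = hr (k - b + 1)"
  have th: "pow_hom h (k - b + 1) 1 (- int (k - b) - 1)"
    unfolding h_def by (rule pow_hom_hr_Suc)
  have thI: "pow_hom (h \<otimes> I r) (k - b + 1 + r) (r + 1) (- int (k - b) - 1)"
    by (rule pow_hom_tensor[OF th pow_hom_I]) (use bk in auto)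
  have tQ: "pow_hom (m_ins (k - b + 1 + r) b) (r + k + 1) (k - b + 1 + r) (1 - int b)"
    by (rule pow_hom_m_ins[OF b]) (use bk in auto)
  have shift: "- int r - int (k - b) = - int r - int k + int b"
    using bk by (simp add: of_nat_diff)
  have eR: "hbar (- int r - int k + int b) (- int r) = neg1 (int r) (h \<otimes> I r)"
    using hbar_at[of r "k - b"] unfolding shift h_def .
  have shifts: "- int (r + k - b) - int b = - int r - int k" "- int (r + k - b) = - int r - int k + int b"
    "r + k - b + 1 = k - b + 1 + r"
    using bk by (simp_all add: of_nat_diff)
  have eA: "\<alpha> (- int r - int k) (- int r - int k + int b)
      = neg1 (int (r + k - b) * (int b + 1)) (m_ins (k - b + 1 + r) b)"
    using bar_alg_at[OF b, of "r + k - b", unfolded shifts(1), unfolded shifts(2,3)] .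
  have "hbar (- int r - int k + int b) (- int r) \<cdot> \<alpha> (- int r - int k) (- int r - int k + int b)
      = neg1 (int r) (neg1 (int (r + k - b) * (int b + 1)) ((h \<otimes> I r) \<cdot> m_ins (k - b + 1 + r) b))"
    unfolding eR eA comp_neg1_left[OF thI pow_hom_neg1[OF tQ]] comp_neg1_right[OF thI tQ] ..
  also have "\<dots> = neg1 (int r + int (r + k - b) * (int b + 1)) (h \<otimes> m_ins r b)
      + neg1 (int r + int (r + k - b) * (int b + 1) + int (r * b)) ((h \<cdot> m_ins (k - b + 1) b) \<otimes> I r)"
    unfolding comp_m_ins[OF b th] neg1_simps by (simp only: add.assoc)
  also have "\<dots> = neg1 (int r * int b + int k * int b + int k) (h \<otimes> m_ins r b)
      + neg1 ((int k - int b) * (int b + 1)) ((h \<cdot> m_ins (k - b + 1) b) \<otimes> I r)"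
    using bk by (intro arg_cong2[where f = "(+)"] neg1_eqI) (auto simp: of_nat_diff algebra_simps)
  finally show ?thesis
    unfolding h_def .
qed

text \<open>The \<open>(k + 1)\<close>-st component of \<open>dh\<close> in \<open>Nod\<^sub>\<infinity>-A\<close>, see \<open>rmod_dif_hr\<close>.\<close>

definition hr_dif :: "nat \<Rightarrow> 'm" where
  "hr_dif k = \<partial> (hr (k + 1))
     + (\<Sum>a\<in>{1..k}. neg1 (int a) (m (a + 1) \<cdot> (hr (k - a + 1) \<otimes> I a)))
     + (\<Sum>b\<in>{1..k}. neg1 ((int k - int b) * (int b + 1)) (hr (k - b + 1) \<cdot> m_ins (k - b + 1) b))"

lemma pow_hom_hr_dif_left:
  "1 \<le> a \<Longrightarrow> a \<le> k \<Longrightarrow> pow_hom (m (a + 1) \<cdot> (hr (k - a + 1) \<otimes> I a)) (k + 1) 1 (- int k)"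
  by (rule pow_hom_comp[OF pow_hom_m_Suc pow_hom_tensor[OF pow_hom_hr_Suc pow_hom_I]]) auto

lemma pow_hom_hr_dif_right:
  "1 \<le> b \<Longrightarrow> b \<le> k \<Longrightarrow> pow_hom (hr (k - b + 1) \<cdot> m_ins (k - b + 1) b) (k + 1) 1 (- int k)"
  by (rule pow_hom_comp[OF pow_hom_hr_Suc pow_hom_m_ins]) auto

lemma pow_hom_hr_dif: "pow_hom (hr_dif k) (k + 1) 1 (- int k)"
  unfolding hr_dif_def
  by (intro pow_hom_add pow_hom_sum pow_hom_neg1 pow_hom_dif[OF pow_hom_hr_Suc]
      pow_hom_hr_dif_left pow_hom_hr_dif_right) auto

lemma hr_dif_tensor_I:
  "hr_dif k \<otimes> I r = \<partial> (hr (k + 1)) \<otimes> I r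
     + (\<Sum>a\<in>{1..k}. neg1 (int a) ((m (a + 1) \<cdot> (hr (k - a + 1) \<otimes> I a)) \<otimes> I r))
     + (\<Sum>b\<in>{1..k}. neg1 ((int k - int b) * (int b + 1)) ((hr (k - b + 1) \<cdot> m_ins (k - b + 1) b) \<otimes> I r))"
proof -
  have t0: "pow_hom (\<partial> (hr (k + 1))) (k + 1) 1 (- int k)"
    by (rule pow_hom_dif[OF pow_hom_hr_Suc]) auto
  have t1: "pow_hom (\<Sum>a\<in>{1..k}. neg1 (int a) (m (a + 1) \<cdot> (hr (k - a + 1) \<otimes> I a))) (k + 1) 1 (- int k)"
    by (intro pow_hom_sum pow_hom_neg1 pow_hom_hr_dif_left) auto
  have t2: "pow_hom (\<Sum>b\<in>{1..k}. neg1 ((int k - int b) * (int b + 1)) (hr (k - b + 1) \<cdot> m_ins (k - b + 1) b))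
      (k + 1) 1 (- int k)"
    by (intro pow_hom_sum pow_hom_neg1 pow_hom_hr_dif_right) auto
  have s1: "(\<Sum>a\<in>{1..k}. neg1 (int a) (m (a + 1) \<cdot> (hr (k - a + 1) \<otimes> I a))) \<otimes> I r
      = (\<Sum>a\<in>{1..k}. neg1 (int a) ((m (a + 1) \<cdot> (hr (k - a + 1) \<otimes> I a)) \<otimes> I r))"
    by (rule tensor_sum_neg1_left[OF pow_hom_hr_dif_left pow_hom_I]) auto
  have s2: "(\<Sum>b\<in>{1..k}. neg1 ((int k - int b) * (int b + 1)) (hr (k - b + 1) \<cdot> m_ins (k - b + 1) b)) \<otimes> I r
      = (\<Sum>b\<in>{1..k}. neg1 ((int k - int b) * (int b + 1)) ((hr (k - b + 1) \<cdot> m_ins (k - b + 1) b) \<otimes> I r))"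
    by (rule tensor_sum_neg1_left[OF pow_hom_hr_dif_right pow_hom_I]) auto
  show ?thesis
    unfolding hr_dif_def tensor_add_left[OF pow_hom_add[OF t0 t1] t2 pow_hom_I]
      tensor_add_left[OF t0 t1 pow_hom_I] s1 s2 ..
qed

lemma fsum_bar_alg_comp_hbar:
  "fsum (\<lambda>x. \<alpha> x (- int r) \<cdot> hbar (- int r - int k) x)
    = (\<Sum>a\<in>{1..k}. neg1 (int r * int a + int k * int a + int k + 1) (hr (k - a + 1) \<otimes> m_ins r a)
        + neg1 (int a) ((m (a + 1) \<cdot> (hr (k - a + 1) \<otimes> I a)) \<otimes> I r))"
proof -
  have "fsum (\<lambda>x. \<alpha> x (- int r) \<cdot> hbar (- int r - int k) x)
      = (\<Sum>a\<in>{1..k}. \<alpha> (- int r - int a) (- int r) \<cdot> hbar (- int r - int k) (- int r - int a))"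
  proof (rule fsum_reindex)
    show "inj_on (\<lambda>a. - int r - int a) {1..k}"
      by (auto simp: inj_on_def)
  next
    fix x
    assume x: "x \<notin> (\<lambda>a. - int r - int a) ` {1..k}"
    have "x < - int r - int k \<or> - int r \<le> x"
    proof (rule ccontr)
      assume "\<not> ?thesis"
      then have "x = - int r - int (nat (- int r - x))" "nat (- int r - x) \<in> {1..k}"
        by auto
      with x show False by blast
    qed
    then show "\<alpha> x (- int r) \<cdot> hbar (- int r - int k) x = 0"
    proof
      assume "x < - int r - int k"
      then have "hbar (- int r - int k) x = 0" by (simp add: hbar_eq)
      then show ?thesis by (simp add: comp_zero_right[OF pow_hom_bar_alg])
    next
      assume "- int r \<le> x"
      then have "\<alpha> x (- int r) = 0" by (simp add: bar_alg_eq)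
      then show ?thesis by (simp add: comp_zero_left[OF pow_hom_hbar])
    qed
  qed simp
  also have "\<dots> = (\<Sum>a\<in>{1..k}. neg1 (int r * int a + int k * int a + int k + 1) (hr (k - a + 1) \<otimes> m_ins r a)
        + neg1 (int a) ((m (a + 1) \<cdot> (hr (k - a + 1) \<otimes> I a)) \<otimes> I r))"
    by (rule sum.cong) (auto simp: bar_alg_comp_hbar)
  finally show ?thesis .
qed

lemma fsum_hbar_comp_bar_alg:
  "fsum (\<lambda>x. hbar x (- int r) \<cdot> \<alpha> (- int r - int k) x)
    = (\<Sum>b\<in>{1..k}. neg1 (int r * int b + int k * int b + int k) (hr (k - b + 1) \<otimes> m_ins r b)
        + neg1 ((int k - int b) * (int b + 1)) ((hr (k - b + 1) \<cdot> m_ins (k - b + 1) b) \<otimes> I r))"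
proof -
  have "fsum (\<lambda>x. hbar x (- int r) \<cdot> \<alpha> (- int r - int k) x)
      = (\<Sum>b\<in>{1..k}. hbar (- int r - int k + int b) (- int r) \<cdot> \<alpha> (- int r - int k) (- int r - int k + int b))"
  proof (rule fsum_reindex)
    show "inj_on (\<lambda>b. - int r - int k + int b) {1..k}"
      by (auto simp: inj_on_def)
  next
    fix x
    assume x: "x \<notin> (\<lambda>b. - int r - int k + int b) ` {1..k}"
    have "x \<le> - int r - int k \<or> - int r < x"
    proof (rule ccontr)
      assume "\<not> ?thesis"
      then have "x = - int r - int k + int (nat (x + int r + int k))" "nat (x + int r + int k) \<in> {1..k}"
        by auto
      with x show False by blast
    qed
    then show "hbar x (- int r) \<cdot> \<alpha> (- int r - int k) x = 0"
    proof
      assume "x \<le> - int r - int k"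
      then have "\<alpha> (- int r - int k) x = 0" by (simp add: bar_alg_eq)
      then show ?thesis by (simp add: comp_zero_right[OF pow_hom_hbar])
    next
      assume "- int r < x"
      then have "hbar x (- int r) = 0" by (simp add: hbar_eq)
      then show ?thesis by (simp add: comp_zero_left[OF pow_hom_bar_alg])
    qed
  qed simp
  also have "\<dots> = (\<Sum>b\<in>{1..k}. neg1 (int r * int b + int k * int b + int k) (hr (k - b + 1) \<otimes> m_ins r b)
        + neg1 ((int k - int b) * (int b + 1)) ((hr (k - b + 1) \<cdot> m_ins (k - b + 1) b) \<otimes> I r))"
    by (rule sum.cong) (auto simp: hbar_comp_bar_alg)
  finally show ?thesis .
qed

lemma tw_d_hbar: "tw_d C \<alpha> \<alpha> (-1) hbar (- int r - int k) (- int r) = hr_dif k \<otimes> I r"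
proof -
  define sgn where "sgn a = int r * int a + int k * int a + int k" for a :: nat
  define X where "X a = hr (k - a + 1) \<otimes> m_ins r a" for a
  define L where "L a = neg1 (int a) ((m (a + 1) \<cdot> (hr (k - a + 1) \<otimes> I a)) \<otimes> I r)" for a
  define R where "R b = neg1 ((int k - int b) * (int b + 1)) ((hr (k - b + 1) \<cdot> m_ins (k - b + 1) b) \<otimes> I r)"
    for b
  have th: "pow_hom (hr (k + 1) \<otimes> I r) (k + 1 + r) (1 + r) (- int k - 1)"
    by (rule pow_hom_tensor[OF pow_hom_hr_Suc pow_hom_I]) auto
  have "neg1 (- int r) (\<partial> (hbar (- int r - int k) (- int r))) = \<partial> (hr (k + 1)) \<otimes> I r"
    unfolding hbar_at dif_neg1[OF th] dif_tensor[OF pow_hom_hr_Suc pow_hom_I] dif_I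
      tensor_zero_right[OF pow_hom_hr_Suc] by simp
  then have "tw_d C \<alpha> \<alpha> (-1) hbar (- int r - int k) (- int r)
      = \<partial> (hr (k + 1)) \<otimes> I r + (\<Sum>a\<in>{1..k}. neg1 (sgn a + 1) (X a) + L a)
        - neg1 (-1) (\<Sum>b\<in>{1..k}. neg1 (sgn b) (X b) + R b)"
    unfolding tw_d_def fsum_bar_alg_comp_hbar fsum_hbar_comp_bar_alg sgn_def X_def L_def R_def by simp
  also have "\<dots> = \<partial> (hr (k + 1)) \<otimes> I r + (\<Sum>a\<in>{1..k}. L a) + (\<Sum>b\<in>{1..k}. R b)"
  proof -
    txt \<open>The terms \<open>h \<otimes> m_ins\<close> coming from the two sides of the differential cancel.\<close>
    have "neg1 (sgn a + 1) (X a) + neg1 (sgn a) (X a) = 0" for a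
      by (simp add: neg1_def)
    then show ?thesis
      by (simp add: sum.distrib[symmetric] algebra_simps)
  qed
  also have "\<dots> = hr_dif k \<otimes> I r"
    unfolding hr_dif_tensor_I L_def R_def ..
  finally show ?thesis .
qed

lemma fsum_bar_alg_comp_eta_bar:
  assumes k: "1 \<le> k"
  shows "fsum (\<lambda>x. \<alpha> x (- int r) \<cdot> eta_bar (- int r - int k + 1) x)
    = neg1 (int r * int k + int k + 1) (\<eta> \<otimes> m_ins r k) + neg1 (int k + 1) ((m (k + 1) \<cdot> (\<eta> \<otimes> I k)) \<otimes> I r)"
proof -
  define p where "p = - int r - int k + 1"
  have tQ: "pow_hom (m_ins (r + 1) k) (1 + (r + k)) (r + 1) (1 - int k)"
    by (rule pow_hom_m_ins[OF k]) auto
  have tE: "pow_hom (\<eta> \<otimes> I (r + k)) (r + k) (1 + (r + k)) 0"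
    by (rule pow_hom_tensor[OF pow_hom_eta pow_hom_I]) auto
  have eA: "\<alpha> (p - 1) (- int r) = neg1 (int r * (int k + 1)) (m_ins (r + 1) k)"
    using bar_alg_at[OF k, of r] by (simp add: p_def)
  have eE: "eta_bar p (p - 1) = neg1 p (\<eta> \<otimes> I (r + k))"
    using k by (simp add: eta_bar_def p_def nat_add_distrib)
  have "fsum (\<lambda>x. \<alpha> x (- int r) \<cdot> eta_bar p x) = \<alpha> (p - 1) (- int r) \<cdot> eta_bar p (p - 1)"
    by (rule fsum_single) (simp add: eta_bar_def comp_zero_right[OF pow_hom_bar_alg])
  also have "\<dots> = neg1 (int r * (int k + 1)) (neg1 p (m_ins (r + 1) k \<cdot> (\<eta> \<otimes> I (r + k))))"
    unfolding eA eE comp_neg1_left[OF tQ pow_hom_neg1[OF tE]] comp_neg1_right[OF tQ tE] ..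
  also have "\<dots> = neg1 (int r * int k + int k + 1) (\<eta> \<otimes> m_ins r k)
      + neg1 (int k + 1) ((m (k + 1) \<cdot> (\<eta> \<otimes> I k)) \<otimes> I r)"
    unfolding m_ins_Suc_comp[OF k pow_hom_eta] neg1_simps
    by (intro arg_cong2[where f = "(+)"] neg1_eqI) (auto simp: p_def algebra_simps)
  finally show ?thesis
    unfolding p_def .
qed

lemma fsum_eta_bar_comp_bar_alg:
  assumes k: "1 \<le> k"
  shows "fsum (\<lambda>x. eta_bar x (- int r) \<cdot> \<alpha> (- int r - int k + 1) x)
    = neg1 (int r * int k + int k) (\<eta> \<otimes> m_ins r k)"
proof (cases "r = 0")
  case True
  then have "eta_bar x (- int r) = 0" for x
    by (auto simp: eta_bar_def)
  then show ?thesis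
    using True by (simp add: fsum_zero comp_zero_left[OF pow_hom_bar_alg] tensor_zero_right[OF pow_hom_eta])
next
  case False
  define p where "p = - int r - int k + 1"
  have tQ: "pow_hom (m_ins r k) (r + k) r (1 - int k)"
    by (rule pow_hom_m_ins[OF k]) auto
  have tE: "pow_hom (\<eta> \<otimes> I r) r (1 + r) 0"
    by (rule pow_hom_tensor[OF pow_hom_eta pow_hom_I]) auto
  have "- int (r - 1) - int k = p" "- int (r - 1) = 1 - int r"
    using False by (simp_all add: p_def of_nat_diff)
  then have eA: "\<alpha> p (1 - int r) = neg1 (int (r - 1) * (int k + 1)) (m_ins r k)"
    using bar_alg_at[OF k, of "r - 1"] False by simp
  have eE: "eta_bar (1 - int r) (- int r) = neg1 (1 - int r) (\<eta> \<otimes> I r)"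
    using False by (simp add: eta_bar_def)
  have "fsum (\<lambda>x. eta_bar x (- int r) \<cdot> \<alpha> p x) = eta_bar (1 - int r) (- int r) \<cdot> \<alpha> p (1 - int r)"
    by (rule fsum_single) (auto simp: eta_bar_def comp_zero_left[OF pow_hom_bar_alg])
  also have "\<dots> = neg1 (1 - int r + int (r - 1) * (int k + 1)) ((\<eta> \<otimes> I r) \<cdot> m_ins r k)"
    unfolding eA eE comp_neg1_left[OF tE pow_hom_neg1[OF tQ]] comp_neg1_right[OF tE tQ] neg1_simps ..
  also have "(\<eta> \<otimes> I r) \<cdot> m_ins r k = \<eta> \<otimes> m_ins r k"
    using comp_m_ins[OF k pow_hom_eta, of r] pow_hom_I[of r] by (simp add: comp_zero_right[OF pow_hom_eta])
  also have "neg1 (1 - int r + int (r - 1) * (int k + 1)) (\<eta> \<otimes> m_ins r k)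
      = neg1 (int r * int k + int k) (\<eta> \<otimes> m_ins r k)"
    using False by (intro neg1_eqI) (auto simp: of_nat_diff algebra_simps)
  finally show ?thesis
    unfolding p_def .
qed

lemma tw_d_eta_bar:
  assumes "1 \<le> k"
  shows "tw_d C \<alpha> \<alpha> (-1) eta_bar (- int r - int k + 1) (- int r)
    = neg1 (int k + 1) ((m (k + 1) \<cdot> (\<eta> \<otimes> I k)) \<otimes> I r)"
  unfolding tw_d_def dif_eta_bar fsum_bar_alg_comp_eta_bar[OF assms] fsum_eta_bar_comp_bar_alg[OF assms]
  by (simp add: neg1_def)

section \<open>The contracting homotopy\<close>

definition contraction :: "int \<Rightarrow> int \<Rightarrow> 'm" where
  "contraction p q = eta_bar p q - hbar p q"

lemma bar_endo_contraction: "bar_endo (-1) contraction"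
  unfolding contraction_def[abs_def] by (rule bar_endo_diff[OF bar_endo_eta_bar bar_endo_hbar])

lemma tw_mor_bar_endo:
  assumes "bar_endo n X"
  shows "tw_mor C {p. p \<le> 0} {p. p \<le> 0} (bar_obj C A) (bar_obj C A) n X"
  unfolding tw_mor_def
proof (intro conjI allI)
  fix k l
  show "if k \<in> {p. p \<le> 0} \<and> l \<in> {p. p \<le> 0}
      then X k l \<in> hom C (bar_obj C A k) (bar_obj C A l) (n + k - l) else X k l = 0"
    using assms by (auto simp: bar_endo_def pow_hom_def bar_obj_def)
  show "finite {l. X k l \<noteq> 0}"
    by (rule finite_subset[of _ "{k - 1..0}"]) (use assms in \<open>auto simp: bar_endo_def\<close>)
qed

lemma tw_d_contraction_at:
  assumes unit: "neg1 (int k - 1) (m (k + 1) \<cdot> (\<eta> \<otimes> I k)) = (if k = 1 then I 1 else 0) + hr_dif (k - 1)"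
    and k: "1 \<le> k"
  shows "tw_d C \<alpha> \<alpha> (-1) contraction (- int r - int k + 1) (- int r) = (if k = 1 then I (r + 1) else 0)"
proof -
  define Z where "Z = (if k = 1 then I 1 else 0) + hr_dif (k - 1)"
  have tD: "pow_hom (hr_dif (k - 1)) k 1 (1 - int k)"
    using pow_hom_hr_dif[of "k - 1"] k by (simp add: of_nat_diff)
  have tU: "pow_hom (if k = 1 then I 1 else 0) k 1 (1 - int k)"
    using pow_hom_I[of 1] by auto
  have tZ: "pow_hom Z k 1 (1 - int k)"
    unfolding Z_def by (rule pow_hom_add[OF tU tD])
  have "m (k + 1) \<cdot> (\<eta> \<otimes> I k) = neg1 (int k - 1) Z"
    using arg_cong[OF unit[folded Z_def], of "neg1 (int k - 1)"] by simp
  moreover have "- int r - int k + 1 = - int r - int (k - 1)"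
    using k by (simp add: of_nat_diff)
  ultimately have "tw_d C \<alpha> \<alpha> (-1) contraction (- int r - int k + 1) (- int r)
      = neg1 (int k + 1) (neg1 (int k - 1) Z \<otimes> I r) - hr_dif (k - 1) \<otimes> I r"
    unfolding contraction_def[abs_def] tw_d_diff[OF bar_endo_eta_bar bar_endo_hbar] tw_d_eta_bar[OF k]
    by (simp only: tw_d_hbar)
  also have "neg1 (int k + 1) (neg1 (int k - 1) Z \<otimes> I r) = Z \<otimes> I r"
    unfolding tensor_neg1_left[OF tZ pow_hom_I] neg1_simps
    by (rule neg1_even) simp
  also have "Z \<otimes> I r - hr_dif (k - 1) \<otimes> I r = (if k = 1 then I 1 \<otimes> I r else 0)"
    unfolding Z_def tensor_add_left[OF tU tD pow_hom_I] using pow_hom_I[of r] by simp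
  finally show ?thesis
    by (simp add: I_add)
qed

lemma tw_d_contraction:
  assumes unit: "\<And>i. 1 \<le> i \<Longrightarrow>
    neg1 (int i - 1) (m (i + 1) \<cdot> (\<eta> \<otimes> I i)) = (if i = 1 then I 1 else 0) + hr_dif (i - 1)"
  shows "tw_d C \<alpha> \<alpha> (-1) contraction = tw_id C {p. p \<le> 0} (bar_obj C A)"
proof (intro ext)
  fix p q
  show "tw_d C \<alpha> \<alpha> (-1) contraction p q = tw_id C {p. p \<le> 0} (bar_obj C A) p q"
  proof (cases "q < p \<or> 0 < q")
    case True
    have "\<partial> (contraction p (p - 1)) = 0" for p
      unfolding contraction_def using pow_hom_eta_bar pow_hom_hbar
      by (simp add: dif_diff[OF pow_hom_eta_bar pow_hom_hbar] dif_eta_bar hbar_eq)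
    with True show ?thesis
      using tw_d_vanishing[OF bar_endo_contraction] by (auto simp: tw_id_def)
  next
    case False
    define r where "r = nat (- q)"
    define k where "k = nat (q - p + 1)"
    have k: "1 \<le> k" and q: "q = - int r" and p: "p = - int r - int k + 1"
      using False by (auto simp: r_def k_def)
    show ?thesis
      using tw_d_contraction_at[OF unit[OF k] k, of r] k
      by (auto simp: tw_id_def bar_obj_def idp_def p q)
  qed
qed

section \<open>Module morphisms on bar constructions\<close>

lemma m_ins_Suc:
  assumes k: "1 \<le> k"
  shows "m_ins (Suc i) k = (\<Sum>j<i. neg1 (int (j * k)) ((ident C A \<otimes> I (Suc i - j - 2)) \<otimes> m (k + 1) \<otimes> I j))
    + neg1 (int (i * k)) (m (k + 1) \<otimes> I i)"
proof -
  have "I (Suc i - j - 1) = ident C A \<otimes> I (Suc i - j - 2)" if "j < i" for j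
    using I_add[of 1 "i - j - 1"] that by (simp add: ident_A Suc_diff_Suc)
  then have "(\<Sum>j<i. m_ins_term (Suc i) k j)
      = (\<Sum>j<i. neg1 (int (j * k)) ((ident C A \<otimes> I (Suc i - j - 2)) \<otimes> m (k + 1) \<otimes> I j))"
    by (simp add: m_ins_term_def)
  moreover have "m_ins_term (Suc i) k i = neg1 (int (i * k)) (m (k + 1) \<otimes> I i)"
    using tensor_I_0(1)[OF pow_hom_m_tensor_I[OF k]] by (simp add: m_ins_term_def)
  ultimately show ?thesis
    by (simp add: m_ins_def)
qed

lemma rmod_bar_self: "rmod_bar C A m A m = \<alpha>"
proof (intro ext)
  fix p q
  show "rmod_bar C A m A m p q = \<alpha> p q"
  proof (cases "p < q \<and> q \<le> 0")
    case True
    then have i: "nat (1 - q) = Suc (nat (- q))"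
      by (simp add: nat_eq_iff)
    have "1 \<le> nat (q - p)"
      using True by arith
    with True show ?thesis
      unfolding rmod_bar_def bar_alg_def Let_def i
      using m_ins_Suc[of "nat (q - p)" "nat (- q)"] by (simp add: m_ins_def m_ins_term_def)
  qed (auto simp: rmod_bar_def bar_alg_def)
qed

lemma rmod_dif_hr:
  assumes i: "1 \<le> i"
  shows "rmod_dif C A m A m A m (-1) hr i = hr_dif (i - 1)"
proof -
  have "1 - int i = - int 0 - int (i - 1)"
    using i by (simp add: of_nat_diff)
  then have "rmod_dif C A m A m A m (-1) hr i = hr_dif (i - 1) \<otimes> I 0"
    using i tw_d_hbar[of 0 "i - 1"] by (simp add: rmod_dif_def rmod_bar_self)
  then show ?thesis
    using tensor_I_0(2)[OF pow_hom_hr_dif] by simp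
qed

lemma rbar_rmu2:
  assumes "x \<le> 0"
  shows "rbar C A 0 (rmu2 m) x 0 = neg1 (- x) (m (nat (2 - x)))"
proof -
  have t: "pow_hom (m (nat (2 - x))) (nat (2 - x)) 1 x"
    using pow_hom_m[of "nat (2 - x)"] assms by simp
  have "nat (- x) + 1 + 1 = nat (2 - x)" "int (nat (- x)) = - x"
    using assms by simp_all
  then have "rmu2 m (nat (- x) + 1) = neg1 (- x) (m (nat (2 - x)))"
    by (simp add: rmu2_def)
  then have "rbar C A 0 (rmu2 m) x 0 = neg1 (- x) (m (nat (2 - x))) \<otimes> I 0"
    using assms by (simp add: rbar_def)
  then show ?thesis
    using tensor_I_0(2)[OF pow_hom_neg1[OF t]] by simp
qed

lemma pow_hom_rbar_rmu2: "pow_hom (rbar C A 0 (rmu2 m) x 0) (nat (2 - x)) 1 x"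
proof (cases "x \<le> 0")
  case True
  then show ?thesis
    using pow_hom_m[of "nat (2 - x)"] by (simp add: rbar_rmu2)
qed (simp add: rbar_def)

lemma rbar_reta:
  assumes "1 \<le> i"
  shows "rbar C A 0 (reta C A \<eta>) (1 - int i) x = (if x = 1 - int i then \<eta> \<otimes> I i else 0)"
proof -
  have "(\<eta> \<otimes> ident C A) \<otimes> I (i - 1) = \<eta> \<otimes> I i"
    using tensor_assoc[OF pow_hom_eta pow_hom_I pow_hom_I, of 1 "i - 1"] assms by (simp add: ident_A I_add)
  then show ?thesis
    using assms by (auto simp: rbar_def reta_def Let_def tensor_zero_left[OF pow_hom_I])
qed

lemma rmod_cmp_mu2_eta:
  assumes i: "1 \<le> i"
  shows "rmod_cmp C A 0 (rmu2 m) 0 (reta C A \<eta>) i = neg1 (int i - 1) (m (i + 1) \<cdot> (\<eta> \<otimes> I i))"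
proof -
  have "rmod_cmp C A 0 (rmu2 m) 0 (reta C A \<eta>) i
      = fsum (\<lambda>x. rbar C A 0 (rmu2 m) x 0 \<cdot> rbar C A 0 (reta C A \<eta>) (1 - int i) x)"
    using i by (simp add: rmod_cmp_def tw_comp_def)
  also have "\<dots> = rbar C A 0 (rmu2 m) (1 - int i) 0 \<cdot> (\<eta> \<otimes> I i)"
    by (subst fsum_single[of "1 - int i"]) (simp_all add: rbar_reta[OF i] comp_zero_right[OF pow_hom_rbar_rmu2])
  also have "rbar C A 0 (rmu2 m) (1 - int i) 0 = neg1 (int i - 1) (m (i + 1))"
  proof -
    have "nat (2 - (1 - int i)) = i + 1"
      by simp
    then show ?thesis
      using i rbar_rmu2[of "1 - int i"] by (simp add: neg1_eqI)
  qed
  moreover have "pow_hom (\<eta> \<otimes> I i) i (i + 1) 0"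
    by (rule pow_hom_tensor[OF pow_hom_eta pow_hom_I]) auto
  ultimately show ?thesis
    using comp_neg1_left[OF pow_hom_m_Suc[OF i]] by simp
qed

end

theorem lemma4p4:
  fixes C :: "('o, 'm::ab_group_add) mdg" and A :: 'o and m :: "nat \<Rightarrow> 'm"
  assumes "monoidal_dg C"
    and "ainf_alg C A m"
    and "strongly_homotopy_unital C A m"
  shows "tw_null_homotopic C {p. p \<le> 0} (bar_obj C A) (bar_alg C A m)"
proof -
  from assms(3) obtain \<eta> hr where \<eta>: "\<eta> \<in> hom C (tunit C) A 0" "dif C \<eta> = 0"
      and hr: "rmod_mor C A A A (-1) hr"
      and unit: "rmod_cmp C A 0 (rmu2 m) 0 (reta C A \<eta>)
        = (\<lambda>i. mod_id C A i + rmod_dif C A m A m A m (-1) hr i)"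
    unfolding strongly_homotopy_unital_def by blast
  interpret monoidal_dg_powers C A
    by unfold_locales (rule assms(1))
  interpret right_unit_data C A m hr \<eta>
  proof
    show "pow_hom (m i) i 1 (2 - int i)" if "2 \<le> i" for i
      using assms(2) that unfolding ainf_alg_def pow_hom_def by (simp add: tens_unit)
    show "pow_hom (hr i) i 1 (- int i)" if "1 \<le> i" for i
      using hr that unfolding rmod_mor_def pow_hom_def
      by (cases i) (auto simp: tens_unit)
  qed (use \<eta> in \<open>simp_all add: pow_hom_def tens_unit\<close>)
  have "neg1 (int i - 1) (m (i + 1) \<cdot> (\<eta> \<otimes> I i)) = (if i = 1 then I 1 else 0) + hr_dif (i - 1)"
    if "1 \<le> i" for i
    using fun_cong[OF unit, of i] that by (simp add: rmod_cmp_mu2_eta rmod_dif_hr mod_id_def ident_A)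
  then show ?thesis
    unfolding tw_null_homotopic_def
    using tw_mor_bar_endo[OF bar_endo_contraction] tw_d_contraction by blast
qed

end
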